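(* Let $\theta<\kappa$ be uncountable regular cardinals. The forcing $\mathbb P^-(\kappa,\theta)$ is $\kappa$-strategically closed.
   Context: $\mathrm{acc}(A)=\{\alpha\in A\mid\sup(A\cap\alpha)=\alpha>0\}$; $E^\kappa_{\ge\theta}$ is the set of ordinals below $\kappa$ of cofinality $\ge\theta$. $\mathbb P^-(\kappa,\theta)$ consists of all $p=\langle C^p_{\alpha,i}\mid\alpha\in\mathrm{acc}(\gamma^p+1),\ i(\alpha)^p\le i<\theta\rangle$ such that: (1) $\gamma^p\in\mathrm{acc}(\kappa)$; (2) for all $\alpha\in\mathrm{acc}(\gamma^p+1)$, $i(\alpha)^p<\theta$ and $\langle C^p_{\alpha,i}\mid i(\alpha)^p\le i<\theta\rangle$ is a $\subseteq$-increasing sequence of clubs in $\alpha$ with $\mathrm{acc}(\alpha)=\bigcup_i\mathrm{acc}(C^p_{\alpha,i})$; (3) for all $\alpha\in\mathrm{acc}(\gamma^p+1)$, $i(\alpha)^p\le i<\theta$ and $\bar\alpha\in\mathrm{acc}(C^p_{\alpha,i})\cap E^\kappa_{\ge\theta}$: $i(\bar\alpha)^p\le i$ and $C^p_{\bar\alpha,i}=C^p_{\alpha,i}\cap\bar\alpha$; (4) for all $\bar\alpha<\alpha$ in $\mathrm{acc}(\gamma^p+1)$ and all sufficiently large $i<\theta$, $C^p_{\bar\alpha,i}=C^p_{\alpha,i}\cap\bar\alpha$. It is ordered by end-extension, with an added maximum element $\emptyset$. For a poset $\mathbb P$ with maximum $1_{\mathbb P}$ and an ordinal $\beta$, the game $\Game_\beta(\mathbb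 P)$ has Players I and II alternately play conditions forming a $\le_{\mathbb P}$-decreasing sequence $\langle p_\alpha\mid\alpha<\beta\rangle$; Player I plays at odd stages, Player II at even stages (including limit stages), and Player II must play $p_0=1_{\mathbb P}$. Player I wins if at some limit $\alpha<\beta$ the sequence $\langle p_\eta\mid\eta<\alpha\rangle$ has no lower bound; otherwise Player II wins. $\mathbb P$ is $\beta$-strategically closed if Player II has a winning strategy in $\Game_\beta(\mathbb P)$. *)

theory Defs
  imports Main "HOL-Library.Equipollence" "HOL-Library.Countable_Set"
begin

text \<open>Ordinals below kappa are modelled as the elements of a well-ordered type 'k,
  whose order type is kappa.\<close>

definition limpt :: "'k::wellorder set \<Rightarrow> 'k \<Rightarrow> bool" where
  "limpt A \<alpha> \<longleftrightarrow> (\<exists>\<beta>. \<beta> < \<alpha>) \<and> (\<forall>\<beta><\<alpha>. \<exists>a\<in>A. \<beta> < a \<and> a < \<alpha>)"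

definition acc :: "'k::wellorder set \<Rightarrow> 'k set" where
  "acc A = {\<alpha>\<in>A. limpt A \<alpha>}"

text \<open>cf(alpha) \<ge> theta, for theta an infinite cardinal: every cofinal subset of alpha
  has cardinality at least |theta|\<close>
definition cof_ge :: "'k::wellorder \<Rightarrow> 'k \<Rightarrow> bool" where
  "cof_ge \<alpha> \<theta> \<longleftrightarrow> (\<forall>X. X \<subseteq> {x. x < \<alpha>} \<and> (\<forall>\<beta><\<alpha>. \<exists>x\<in>X. \<beta> \<le> x)
        \<longrightarrow> {x. x < \<theta>} \<lesssim> X)"

definition club_in :: "'k::wellorder set \<Rightarrow> 'k \<Rightarrow> bool" where
  "club_in C \<alpha> \<longleftrightarrow> C \<subseteq> {x. x < \<alpha>} \<and> (\<forall>\<beta><\<alpha>. \<exists>c\<in>C. \<beta> \<le> c)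
      \<and> (\<forall>\<beta><\<alpha>. limpt C \<beta> \<longrightarrow> \<beta> \<in> C)"

text \<open>A nonempty condition p: gamma^p, the function alpha \<mapsto> i(alpha)^p, and the clubs
  C^p_{alpha,i}; values outside acc(gamma^p+1) \<times> [i(alpha)^p, theta) are irrelevant.\<close>
record 'k pcond =
  gam :: 'k
  idx :: "'k \<Rightarrow> 'k"
  clb :: "'k \<Rightarrow> 'k \<Rightarrow> 'k set"

definition valid_cond :: "'k::wellorder \<Rightarrow> 'k pcond \<Rightarrow> bool" where
  "valid_cond \<theta> p \<longleftrightarrow>
     gam p \<in> acc UNIV
   \<and> (\<forall>\<alpha>\<in>acc {x. x \<le> gam p}.
        idx p \<alpha> < \<theta>
      \<and> (\<forall>i. idx p \<alpha> \<le> i \<and> i < \<theta> \<longrightarrow> club_in (clb p \<alpha> i) \<alpha>)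
      \<and> (\<forall>i j. idx p \<alpha> \<le> i \<and> i \<le> j \<and> j < \<theta> \<longrightarrow> clb p \<alpha> i \<subseteq> clb p \<alpha> j)
      \<and> acc {x. x < \<alpha>} = (\<Union>i\<in>{i. idx p \<alpha> \<le> i \<and> i < \<theta>}. acc (clb p \<alpha> i)))
   \<and> (\<forall>\<alpha>\<in>acc {x. x \<le> gam p}. \<forall>i. idx p \<alpha> \<le> i \<and> i < \<theta> \<longrightarrow>
        (\<forall>\<alpha>'\<in>acc (clb p \<alpha> i). cof_ge \<alpha>' \<theta> \<longrightarrow>
           idx p \<alpha>' \<le> i \<and> clb p \<alpha>' i = clb p \<alpha> i \<inter> {x. x < \<alpha>'}))
   \<and> (\<forall>\<alpha>'\<in>acc {x. x \<le> gam p}. \<forall>\<alpha>\<in>acc {x. x \<le> gam p}. \<alpha>' < \<alpha> \<longrightarrow>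
        (\<exists>j<\<theta>. idx p \<alpha> \<le> j \<and> idx p \<alpha>' \<le> j \<and>
           (\<forall>i. j \<le> i \<and> i < \<theta> \<longrightarrow> clb p \<alpha>' i = clb p \<alpha> i \<inter> {x. x < \<alpha>'})))"

text \<open>P^-(kappa,theta): None is the added maximum element (the empty condition).\<close>
definition Pminus :: "'k::wellorder \<Rightarrow> 'k pcond option set" where
  "Pminus \<theta> = {None} \<union> Some ` {p. valid_cond \<theta> p}"

definition Pminus_le :: "'k::wellorder \<Rightarrow> 'k pcond option \<Rightarrow> 'k pcond option \<Rightarrow> bool" where
  "Pminus_le \<theta> q p \<longleftrightarrow> (case p of None \<Rightarrow> True
     | Some p' \<Rightarrow> (case q of None \<Rightarrow> False
        | Some q' \<Rightarrow> gam p' \<le> gam q' \<and>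
            (\<forall>\<alpha>\<in>acc {x. x \<le> gam p'}. idx q' \<alpha> = idx p' \<alpha> \<and>
               (\<forall>i. idx p' \<alpha> \<le> i \<and> i < \<theta> \<longrightarrow> clb q' \<alpha> i = clb p' \<alpha> i))))"

text \<open>Parity of ordinals: alpha = lambda + n with lambda zero or limit, even iff n even.\<close>
definition osucc :: "'k::wellorder \<Rightarrow> 'k" where
  "osucc x = (LEAST y. x < y)"

definition ord_even :: "'k::wellorder \<Rightarrow> bool" where
  "ord_even \<alpha> \<longleftrightarrow> (\<exists>l n. (\<forall>\<beta><l. \<exists>\<delta><l. \<beta> < \<delta>) \<and> \<alpha> = (osucc ^^ (2 * n)) l)"

definition restr :: "('k::wellorder \<Rightarrow> 'c) \<Rightarrow> 'c \<Rightarrow> 'k \<Rightarrow> 'k \<Rightarrow> 'c" where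
  "restr s one \<alpha> = (\<lambda>\<eta>. if \<eta> < \<alpha> then s \<eta> else one)"

text \<open>Player II has a winning strategy in the game of length kappa = order type of 'k
  on the poset (P, le) with maximum one. A strategy sigma gives II's move at an even stage
  alpha from the position (restriction of the play below alpha). It is winning iff at every
  position reached by playing according to sigma (with Player I making legal moves),
  sigma's move is a legal move (a lower bound of all previous moves; 1 at stage 0).\<close>
definition strat_closed_full ::
  "'c set \<Rightarrow> ('c \<Rightarrow> 'c \<Rightarrow> bool) \<Rightarrow> 'c \<Rightarrow> ('k::wellorder itself) \<Rightarrow> bool" where
  "strat_closed_full P le one _ \<longleftrightarrow>
    (\<exists>\<sigma> :: 'k \<Rightarrow> ('k \<Rightarrow> 'c) \<Rightarrow> 'c.
      \<forall>\<alpha> (s :: 'k \<Rightarrow> 'c).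
        ord_even \<alpha>
        \<and> (\<forall>\<beta><\<alpha>. s \<beta> \<in> P)
        \<and> (\<forall>\<beta><\<alpha>. ord_even \<beta> \<longrightarrow> s \<beta> = \<sigma> \<beta> (restr s one \<beta>))
        \<and> (\<forall>\<beta><\<alpha>. \<not> ord_even \<beta> \<longrightarrow> (\<forall>\<eta><\<beta>. le (s \<beta>) (s \<eta>)))
        \<longrightarrow> \<sigma> \<alpha> (restr s one \<alpha>) \<in> P
          \<and> (\<forall>\<eta><\<alpha>. le (\<sigma> \<alpha> (restr s one \<alpha>)) (s \<eta>))
          \<and> ((\<forall>\<beta>. \<alpha> \<le> \<beta>) \<longrightarrow> \<sigma> \<alpha> (restr s one \<alpha>) = one))"

definition univ_uncountable_regular :: "'k::wellorder itself \<Rightarrow> bool" where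
  "univ_uncountable_regular _ \<longleftrightarrow>
     \<not> countable (UNIV :: 'k set)
   \<and> (\<forall>a::'k. {x. x < a} \<prec> (UNIV :: 'k set))
   \<and> (\<forall>X :: 'k set. (\<forall>a. \<exists>x\<in>X. a \<le> x) \<longrightarrow> (UNIV :: 'k set) \<lesssim> X)"

definition uncountable_regular :: "'k::wellorder \<Rightarrow> bool" where
  "uncountable_regular \<theta> \<longleftrightarrow>
     \<not> countable {x. x < \<theta>}
   \<and> (\<forall>a<\<theta>. {x. x < a} \<prec> {x. x < \<theta>})
   \<and> (\<forall>X. X \<subseteq> {x. x < \<theta>} \<and> (\<forall>a<\<theta>. \<exists>x\<in>X. a \<le> x) \<longrightarrow> {x. x < \<theta>} \<lesssim> X)"

end

theory Submission
  imports Defs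
begin

(* Player II keeps its own moves (those at even stages) in a special form: their top level
   gam p has index 0, and they are top-coherent: for every i < theta, the top club of an earlier
   move of II is the initial segment below its top point of the top club of any later move of II,
   which contains that top point.
   At a stage beta + 2, II extends Player I's move q at beta + 1 to the next limit gamma above
   gam q. The new top club at index i is C^q_{gam q, i} followed by the interval [gam q, gamma)
   once i is past an index from which C^q_{gam q, i} continues the top clubs of II's move p at
   beta; below that index it is C^p_{gam p, i} together with gam p, followed by the interval.
   Since the interval contains no limit points, this is a condition below q, top-coherent with p.
   At a limit stage, II takes the union of the play and puts on top the union of the top clubs
   of its own moves; top-coherence makes these unions clubs whose restrictions are the earlier
   top clubs, and regularity of kappa keeps the supremum of the play below kappa. *)

section \<open>Accumulation points and clubs\<close>

lemma limpt_restrict: "limpt A x \<Longrightarrow> A \<inter> {y. y < x} \<subseteq> B \<Longrightarrow> limpt B x"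
  unfolding limpt_def by blast

lemma limpt_mono: "limpt A x \<Longrightarrow> A \<subseteq> B \<Longrightarrow> limpt B x"
  unfolding limpt_def by blast

lemma limpt_UNIV: "limpt A x \<Longrightarrow> limpt UNIV x"
  using limpt_mono by blast

lemma acc_subset: "acc A \<subseteq> A"
  unfolding acc_def by blast

lemma acc_mono: "A \<subseteq> B \<Longrightarrow> acc A \<subseteq> acc B"
  unfolding acc_def using limpt_mono by blast

lemma acc_limpt_UNIV: "x \<in> acc A \<Longrightarrow> limpt UNIV x"
  unfolding acc_def using limpt_UNIV by blast

lemma acc_downward_closed:
  assumes "\<And>x y. x \<in> A \<Longrightarrow> y < x \<Longrightarrow> y \<in> A"
  shows "acc A = {\<xi> \<in> A. limpt UNIV \<xi>}"
  unfolding acc_def using assms by (auto intro: limpt_restrict limpt_UNIV)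

lemma acc_Collect_le: "acc {x. x \<le> g} = {\<xi>. \<xi> \<le> g \<and> limpt UNIV \<xi>}"
  by (subst acc_downward_closed) auto

lemma acc_Collect_less: "acc {x. x < g} = {\<xi>. \<xi> < g \<and> limpt UNIV \<xi>}"
  by (subst acc_downward_closed) auto

lemma club_in_subset: "club_in C a \<Longrightarrow> C \<subseteq> {x. x < a}"
  unfolding club_in_def by blast

lemma club_in_limpt: "club_in C a \<Longrightarrow> limpt UNIV a \<Longrightarrow> limpt C a"
  unfolding club_in_def limpt_def by (meson le_less_trans less_le_trans subsetD mem_Collect_eq)

lemma Int_less_restrict:
  "A \<inter> {x. x < d} = B \<Longrightarrow> (a::'a::order) < d \<Longrightarrow> A \<inter> {x. x < a} = B \<inter> {x. x < a}"
  by auto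

lemma club_in_interval_gap:
  fixes \<delta> :: "'k::wellorder"
  assumes "\<delta> < \<gamma>" and gap: "\<And>x. \<delta> < x \<Longrightarrow> x < \<gamma> \<Longrightarrow> \<not> limpt UNIV x"
  shows "club_in {x. \<delta> \<le> x \<and> x < \<gamma>} \<gamma>" "acc {x. \<delta> \<le> x \<and> x < \<gamma>} = {}"
proof -
  let ?I = "{x. \<delta> \<le> x \<and> x < \<gamma>}"
  have above: "\<delta> < b" if "limpt ?I b" for b
    using that unfolding limpt_def by (auto intro: le_less_trans)
  show "club_in ?I \<gamma>"
    unfolding club_in_def
  proof (intro conjI allI impI)
    fix \<beta> assume "\<beta> < \<gamma>"
    then show "\<exists>c\<in>?I. \<beta> \<le> c"
      using \<open>\<delta> < \<gamma>\<close> by (intro bexI[of _ "max \<beta> \<delta>"]) auto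
    assume "limpt ?I \<beta>"
    then show "\<beta> \<in> ?I" using above \<open>\<beta> < \<gamma>\<close> by (simp add: less_imp_le)
  qed auto
  show "acc ?I = {}"
    unfolding acc_def using above gap limpt_UNIV by blast
qed

lemma club_in_extend_gap:
  fixes C :: "'k::wellorder set"
  assumes club: "club_in C \<mu>" and lim: "limpt UNIV \<mu>" and "\<mu> \<le> \<delta>" and "\<delta> < \<gamma>"
    and gap: "\<And>x. \<delta> < x \<Longrightarrow> x < \<gamma> \<Longrightarrow> \<not> limpt UNIV x"
  defines "B \<equiv> C \<union> {\<mu>} \<union> {x. \<delta> \<le> x \<and> x < \<gamma>}"
  shows "club_in B \<gamma>" "acc B \<subseteq> insert \<mu> (acc C)" "B \<inter> {x. x < \<mu>} = C" "\<mu> \<in> B"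
    "limpt B \<mu>"
proof -
  have C_below: "C \<subseteq> {x. x < \<mu>}"
    using club by (rule club_in_subset)
  have B_below: "B \<inter> {x. x < b} \<subseteq> C" if "b \<le> \<mu>" for b
    using that \<open>\<mu> \<le> \<delta>\<close> unfolding B_def by auto
  show "B \<inter> {x. x < \<mu>} = C"
    using B_below[of \<mu>] C_below unfolding B_def by auto
  show "\<mu> \<in> B"
    unfolding B_def by simp
  show "limpt B \<mu>"
    using club_in_limpt[OF club lim] unfolding B_def by (auto intro: limpt_mono)
  have limpt_B: "b = \<mu> \<or> b \<in> acc C" if b: "limpt B b" "b < \<gamma>" for b
  proof (cases b \<mu> rule: linorder_cases)
    case less
    then have "limpt C b"
      using b(1) B_below by (blast intro: limpt_restrict less_imp_le)
    then show ?thesis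
      using club less unfolding club_in_def acc_def by blast
  next
    case greater
    obtain a where "a \<in> B" "\<mu> < a" "a < b"
      using b(1) greater unfolding limpt_def by blast
    then have "\<delta> < b"
      using C_below unfolding B_def by (auto intro: le_less_trans)
    then show ?thesis
      using gap b limpt_UNIV by blast
  qed simp
  show "club_in B \<gamma>"
    unfolding club_in_def
  proof (intro conjI allI impI)
    show "B \<subseteq> {x. x < \<gamma>}"
      using C_below \<open>\<mu> \<le> \<delta>\<close> \<open>\<delta> < \<gamma>\<close> unfolding B_def by auto
    fix b assume "b < \<gamma>"
    then show "\<exists>c\<in>B. b \<le> c"
      using \<open>\<delta> < \<gamma>\<close> unfolding B_def by (intro bexI[of _ "max b \<delta>"]) auto
    assume "limpt B b"
    then show "b \<in> B"
      using limpt_B \<open>b < \<gamma>\<close> acc_subset unfolding B_def by blast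
  qed
  then show "acc B \<subseteq> insert \<mu> (acc C)"
    using limpt_B club_in_subset acc_subset unfolding acc_def by blast
qed

section \<open>Successor ordinals and parity\<close>

definition ord0 :: "'k::wellorder" where
  "ord0 = (LEAST x. True)"

lemma ord0_le [simp]: "ord0 \<le> x"
  unfolding ord0_def by (rule Least_le) simp

definition zero_or_limit :: "'k::wellorder \<Rightarrow> bool" where
  "zero_or_limit l \<longleftrightarrow> (\<forall>\<beta><l. \<exists>\<delta><l. \<beta> < \<delta>)"

lemma ord_even_iff: "ord_even \<alpha> \<longleftrightarrow> (\<exists>l n. zero_or_limit l \<and> \<alpha> = (osucc ^^ (2 * n)) l)"
  unfolding ord_even_def zero_or_limit_def ..

definition next_limit :: "'k::wellorder \<Rightarrow> 'k" where
  "next_limit d = (LEAST y. d < y \<and> limpt UNIV y)"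

(* 'k has order type kappa; its regularity is used only through countable_bounded and
   small_bounded, see forcing_setting_if_regular. *)
locale forcing_setting =
  fixes \<theta> :: "'k::wellorder"
  assumes gt_ex: "\<And>x::'k. \<exists>y. x < y"
    and countable_bounded: "\<And>X::'k set. countable X \<Longrightarrow> \<exists>u. \<forall>x\<in>X. x < u"
    and small_bounded: "\<And>(X::'k set) a. X \<lesssim> {x::'k. x < a} \<Longrightarrow> \<exists>u. \<forall>x\<in>X. x < u"
    and ord0_less_theta: "ord0 < \<theta>"
begin

lemma less_osucc: "(x::'k) < osucc x"
  unfolding osucc_def by (rule LeastI_ex) (rule gt_ex)

lemma osucc_le: "(x::'k) < y \<Longrightarrow> osucc x \<le> y"
  unfolding osucc_def by (rule Least_le)

lemma less_osucc_iff: "(y::'k) < osucc x \<longleftrightarrow> y \<le> x"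
  using less_osucc osucc_le by (meson leD leI le_less_trans)

lemma osucc_inj: "osucc (x::'k) = osucc y \<Longrightarrow> x = y"
  by (metis less_osucc_iff antisym order_refl)

(* Junk at limits; only applied to successor ordinals. *)
definition opred :: "'k \<Rightarrow> 'k" where
  "opred a = (THE x. osucc x = a)"

lemma opred_osucc [simp]: "opred (osucc x) = x"
  unfolding opred_def using osucc_inj by blast

lemma zero_or_limit_osucc_less: "zero_or_limit (a::'k) \<Longrightarrow> x < a \<Longrightarrow> osucc x < a"
  unfolding zero_or_limit_def by (meson le_less_trans osucc_le)

lemma zero_or_limit_neq_osucc: "zero_or_limit (x::'k) \<Longrightarrow> x \<noteq> osucc y"
  using less_osucc zero_or_limit_osucc_less by blast

lemma osucc_iterate_decomp: "\<exists>l n. zero_or_limit l \<and> (x::'k) = (osucc ^^ n) l"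
proof (induction x rule: less_induct)
  case (less x)
  show ?case
  proof (cases "zero_or_limit x")
    case True
    then show ?thesis by (metis funpow_0)
  next
    case False
    then obtain b where "b < x" "\<forall>d<x. \<not> b < d"
      unfolding zero_or_limit_def by blast
    then have "x = osucc b"
      using osucc_le[of b x] less_osucc[of b] by (metis le_less)
    moreover obtain l n where "zero_or_limit l" "b = (osucc ^^ n) l"
      using less \<open>b < x\<close> by blast
    ultimately show ?thesis by (metis funpow.simps(2) o_apply)
  qed
qed

lemma osucc_iterate_inj:
  "zero_or_limit (l::'k) \<Longrightarrow> zero_or_limit l' \<Longrightarrow> (osucc ^^ k) l = (osucc ^^ k') l' \<Longrightarrow> k = k'"
proof (induction k arbitrary: k')
  case 0
  then show ?case
    using zero_or_limit_neq_osucc by (cases k') auto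
next
  case (Suc k)
  show ?case
  proof (cases k')
    case 0
    then show ?thesis
      using Suc.prems zero_or_limit_neq_osucc[of l' "(osucc ^^ k) l"] by simp
  next
    case (Suc m)
    then show ?thesis
      using Suc.IH Suc.prems osucc_inj by simp
  qed
qed

lemma ord_even_osucc_osucc: "ord_even (x::'k) \<Longrightarrow> ord_even (osucc (osucc x))"
proof -
  assume "ord_even x"
  then obtain l n where "zero_or_limit l" "x = (osucc ^^ (2 * n)) l"
    unfolding ord_even_iff by blast
  then have "zero_or_limit l \<and> osucc (osucc x) = (osucc ^^ (2 * Suc n)) l"
    by simp
  then show ?thesis
    unfolding ord_even_iff by blast
qed

lemma not_ord_even_osucc: "ord_even (x::'k) \<Longrightarrow> \<not> ord_even (osucc x)"
proof
  assume "ord_even x" "ord_even (osucc x)"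
  then obtain l n l' m where "zero_or_limit l" "x = (osucc ^^ (2 * n)) l"
    and "zero_or_limit l'" "osucc x = (osucc ^^ (2 * m)) l'"
    unfolding ord_even_iff by blast
  then have "Suc (2 * n) = 2 * m"
    using osucc_iterate_inj[of l l' "Suc (2 * n)"] by simp
  then show False by presburger
qed

lemma ord_even_less_osucc_osucc:
  assumes "ord_even (\<beta>::'k)" "\<eta> < osucc (osucc \<beta>)" "ord_even \<eta>"
  shows "\<eta> \<le> \<beta>"
proof -
  have "\<eta> \<noteq> osucc \<beta>"
    using not_ord_even_osucc[OF assms(1)] assms(3) by auto
  then show ?thesis
    using assms(2) less_osucc_iff by (simp add: le_less)
qed

lemma ord_even_cofinal:
  assumes "zero_or_limit (a::'k)" "x < a"
  shows "\<exists>y. ord_even y \<and> x \<le> y \<and> y < a"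
proof -
  obtain l n where l: "zero_or_limit l" and x: "x = (osucc ^^ n) l"
    using osucc_iterate_decomp by blast
  have "ord_even x \<or> ord_even (osucc x)"
  proof (cases "even n")
    case True
    then obtain m where "n = 2 * m" by blast
    then show ?thesis
      using l x unfolding ord_even_iff by blast
  next
    case False
    then obtain m where "Suc n = 2 * m"
      by (metis dvd_def even_Suc)
    moreover have "osucc x = (osucc ^^ Suc n) l"
      using x by simp
    ultimately show ?thesis
      using l unfolding ord_even_iff by metis
  qed
  then show ?thesis
    using assms zero_or_limit_osucc_less less_osucc less_imp_le order_refl by blast
qed

lemma ord_even_not_limit:
  assumes "ord_even (a::'k)" "\<not> zero_or_limit a"
  obtains b where "ord_even b" "a = osucc (osucc b)"
proof -
  obtain l n where "zero_or_limit l" "a = (osucc ^^ (2 * n)) l"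
    using assms(1) unfolding ord_even_iff by blast
  moreover obtain m where "n = Suc m"
    using calculation assms(2) by (cases n) auto
  ultimately show ?thesis
    using that unfolding ord_even_iff by auto
qed

lemma next_limit_exists: "\<exists>y. (d::'k) < y \<and> limpt UNIV y"
proof -
  let ?X = "range (\<lambda>n. (osucc ^^ n) d)"
  define y where "y = (LEAST u. \<forall>x\<in>?X. x < u)"
  have y: "\<forall>x\<in>?X. x < y"
    unfolding y_def by (rule LeastI_ex, rule countable_bounded) simp
  have "limpt UNIV y"
    unfolding limpt_def
  proof (intro conjI allI impI)
    show "\<exists>b. b < y"
      using y by blast
    fix b assume "b < y"
    then obtain n where "b \<le> (osucc ^^ n) d"
      unfolding y_def using not_less_Least by (fastforce simp: not_less)
    then have "b < (osucc ^^ Suc n) d"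
      using less_osucc by (simp add: le_less_trans)
    then show "\<exists>a\<in>UNIV. b < a \<and> a < y"
      using y by blast
  qed
  moreover have "d < y"
    using y by (metis funpow_0 rangeI)
  ultimately show ?thesis by blast
qed

lemma next_limit: "(d::'k) < next_limit d" "limpt UNIV (next_limit d)"
  unfolding next_limit_def using LeastI_ex[OF next_limit_exists] by blast+

lemma not_limpt_below_next_limit: "(d::'k) < x \<Longrightarrow> x < next_limit d \<Longrightarrow> \<not> limpt UNIV x"
  unfolding next_limit_def using not_less_Least by blast

lemma limpt_le_next_limit: "(b::'k) \<le> next_limit d \<Longrightarrow> limpt UNIV b \<Longrightarrow> b = next_limit d \<or> b \<le> d"
  using not_limpt_below_next_limit[of d b] by (meson le_less not_le)

end

section \<open>Conditions\<close>

definition level_ok :: "'k::wellorder \<Rightarrow> 'k pcond \<Rightarrow> 'k \<Rightarrow> bool" where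
  "level_ok \<theta> p a \<longleftrightarrow> idx p a < \<theta>
      \<and> (\<forall>i. idx p a \<le> i \<and> i < \<theta> \<longrightarrow> club_in (clb p a i) a)
      \<and> (\<forall>i j. idx p a \<le> i \<and> i \<le> j \<and> j < \<theta> \<longrightarrow> clb p a i \<subseteq> clb p a j)
      \<and> acc {x. x < a} = (\<Union>i\<in>{i. idx p a \<le> i \<and> i < \<theta>}. acc (clb p a i))
      \<and> (\<forall>i. idx p a \<le> i \<and> i < \<theta> \<longrightarrow> (\<forall>a'\<in>acc (clb p a i). cof_ge a' \<theta> \<longrightarrow>
           idx p a' \<le> i \<and> clb p a' i = clb p a i \<inter> {x. x < a'}))"

definition levels_cohere :: "'k::wellorder \<Rightarrow> 'k pcond \<Rightarrow> 'k \<Rightarrow> 'k \<Rightarrow> bool" where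
  "levels_cohere \<theta> p a' a \<longleftrightarrow> (\<exists>j<\<theta>. idx p a \<le> j \<and> idx p a' \<le> j \<and>
      (\<forall>i. j \<le> i \<and> i < \<theta> \<longrightarrow> clb p a' i = clb p a i \<inter> {x. x < a'}))"

lemma valid_cond_iff:
  "valid_cond \<theta> p \<longleftrightarrow> limpt UNIV (gam p)
     \<and> (\<forall>a. a \<le> gam p \<and> limpt UNIV a \<longrightarrow> level_ok \<theta> p a)
     \<and> (\<forall>a' a. a' < a \<and> a \<le> gam p \<and> limpt UNIV a' \<and> limpt UNIV a \<longrightarrow> levels_cohere \<theta> p a' a)"
proof -
  have ball_acc: "(\<forall>a\<in>acc {x. x \<le> gam p}. P a) \<longleftrightarrow> (\<forall>a. a \<le> gam p \<and> limpt UNIV a \<longrightarrow> P a)"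
    for P :: "'a \<Rightarrow> bool"
    unfolding acc_Collect_le by blast
  have top: "gam p \<in> acc UNIV \<longleftrightarrow> limpt UNIV (gam p)"
    unfolding acc_def by simp
  have pairs: "(\<forall>a'. a' \<le> gam p \<and> limpt UNIV a' \<longrightarrow> (\<forall>a. a \<le> gam p \<and> limpt UNIV a \<longrightarrow> a' < a \<longrightarrow> Q a' a))
      \<longleftrightarrow> (\<forall>a' a. a' < a \<and> a \<le> gam p \<and> limpt UNIV a' \<and> limpt UNIV a \<longrightarrow> Q a' a)" for Q
    by (meson less_imp_le order.trans)
  show ?thesis
    unfolding valid_cond_def level_ok_def levels_cohere_def ball_acc top
    by (simp only: imp_conjR all_conj_distrib conj_assoc pairs)
qed

lemma level_okD:
  assumes "level_ok \<theta> p a"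
  shows "idx p a < \<theta>"
    and "\<And>i. idx p a \<le> i \<Longrightarrow> i < \<theta> \<Longrightarrow> club_in (clb p a i) a"
    and "\<And>i j. idx p a \<le> i \<Longrightarrow> i \<le> j \<Longrightarrow> j < \<theta> \<Longrightarrow> clb p a i \<subseteq> clb p a j"
    and "acc {x. x < a} = (\<Union>i\<in>{i. idx p a \<le> i \<and> i < \<theta>}. acc (clb p a i))"
    and "\<And>i a'. idx p a \<le> i \<Longrightarrow> i < \<theta> \<Longrightarrow> a' \<in> acc (clb p a i) \<Longrightarrow> cof_ge a' \<theta> \<Longrightarrow>
      idx p a' \<le> i \<and> clb p a' i = clb p a i \<inter> {x. x < a'}"
proof -
  note L = assms[unfolded level_ok_def]
  show "idx p a < \<theta>"
    using L by simp
  show "club_in (clb p a i) a" if "idx p a \<le> i" "i < \<theta>" for i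
    using L that by simp
  show "clb p a i \<subseteq> clb p a j" if "idx p a \<le> i" "i \<le> j" "j < \<theta>" for i j
    using L[THEN conjunct2, THEN conjunct2, THEN conjunct1] that by blast
  show "acc {x. x < a} = (\<Union>i\<in>{i. idx p a \<le> i \<and> i < \<theta>}. acc (clb p a i))"
    using L by simp
  show "idx p a' \<le> i \<and> clb p a' i = clb p a i \<inter> {x. x < a'}"
    if "idx p a \<le> i" "i < \<theta>" "a' \<in> acc (clb p a i)" "cof_ge a' \<theta>" for i a'
    using L[THEN conjunct2, THEN conjunct2, THEN conjunct2, THEN conjunct2] that by blast
qed

lemma level_okI:
  assumes "idx p a < \<theta>"
    and "\<And>i. idx p a \<le> i \<Longrightarrow> i < \<theta> \<Longrightarrow> club_in (clb p a i) a"
    and "\<And>i j. idx p a \<le> i \<Longrightarrow> i \<le> j \<Longrightarrow> j < \<theta> \<Longrightarrow> clb p a i \<subseteq> clb p a j"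
    and "acc {x. x < a} = (\<Union>i\<in>{i. idx p a \<le> i \<and> i < \<theta>}. acc (clb p a i))"
    and "\<And>i a'. idx p a \<le> i \<Longrightarrow> i < \<theta> \<Longrightarrow> a' \<in> acc (clb p a i) \<Longrightarrow> cof_ge a' \<theta> \<Longrightarrow>
      idx p a' \<le> i \<and> clb p a' i = clb p a i \<inter> {x. x < a'}"
  shows "level_ok \<theta> p a"
  unfolding level_ok_def
  by (intro conjI allI impI ballI; (elim conjE)?)
    (rule assms assms(5)[THEN conjunct1] assms(5)[THEN conjunct2]; assumption)+

lemma valid_cond_limpt: "valid_cond \<theta> p \<Longrightarrow> limpt UNIV (gam p)"
  unfolding valid_cond_iff by blast

lemma valid_cond_level_ok: "valid_cond \<theta> p \<Longrightarrow> a \<le> gam p \<Longrightarrow> limpt UNIV a \<Longrightarrow> level_ok \<theta> p a"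
  unfolding valid_cond_iff by blast

lemma valid_cond_top_level: "valid_cond \<theta> p \<Longrightarrow> level_ok \<theta> p (gam p)"
  using valid_cond_level_ok valid_cond_limpt by blast

lemma valid_cond_levels_cohere:
  "valid_cond \<theta> p \<Longrightarrow> a' < a \<Longrightarrow> a \<le> gam p \<Longrightarrow> limpt UNIV a' \<Longrightarrow> limpt UNIV a \<Longrightarrow>
    levels_cohere \<theta> p a' a"
  unfolding valid_cond_iff by blast

lemma valid_cond_top_club:
  assumes "valid_cond \<theta> p" "idx p (gam p) = ord0" "i < \<theta>"
  shows "club_in (clb p (gam p) i) (gam p)"
  using level_okD(2)[OF valid_cond_top_level[OF assms(1)], of i] assms(2,3) by simp

lemma valid_cond_top_mono:
  assumes "valid_cond \<theta> p" "idx p (gam p) = ord0" "i \<le> j" "j < \<theta>"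
  shows "clb p (gam p) i \<subseteq> clb p (gam p) j"
  using level_okD(3)[OF valid_cond_top_level[OF assms(1)], of i j] assms(2-4) by simp

definition agree_upto :: "'k::wellorder \<Rightarrow> 'k pcond \<Rightarrow> 'k pcond \<Rightarrow> 'k \<Rightarrow> bool" where
  "agree_upto \<theta> p q a \<longleftrightarrow> (\<forall>b. b \<le> a \<and> limpt UNIV b \<longrightarrow>
     idx q b = idx p b \<and> (\<forall>i. idx p b \<le> i \<and> i < \<theta> \<longrightarrow> clb q b i = clb p b i))"

lemma agree_uptoD:
  "agree_upto \<theta> p q a \<Longrightarrow> b \<le> a \<Longrightarrow> limpt UNIV b \<Longrightarrow> idx q b = idx p b"
  "agree_upto \<theta> p q a \<Longrightarrow> b \<le> a \<Longrightarrow> limpt UNIV b \<Longrightarrow> idx p b \<le> i \<Longrightarrow> i < \<theta> \<Longrightarrow>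
    clb q b i = clb p b i"
  unfolding agree_upto_def by blast+

lemma agree_upto_sym: "agree_upto \<theta> p q a \<Longrightarrow> agree_upto \<theta> q p a"
  unfolding agree_upto_def by simp

lemma agree_upto_mono: "agree_upto \<theta> p q a \<Longrightarrow> b \<le> a \<Longrightarrow> agree_upto \<theta> p q b"
  unfolding agree_upto_def by (meson order.trans)

lemma agree_upto_trans: "agree_upto \<theta> p q a \<Longrightarrow> agree_upto \<theta> q r a \<Longrightarrow> agree_upto \<theta> p r a"
  unfolding agree_upto_def by simp

lemma Pminus_Some_iff [simp]: "Some p \<in> Pminus \<theta> \<longleftrightarrow> valid_cond \<theta> p"
  unfolding Pminus_def by auto

lemma None_in_Pminus [simp]: "None \<in> Pminus \<theta>"
  unfolding Pminus_def by auto

lemma Pminus_le_Some_iff: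
  "Pminus_le \<theta> (Some q) (Some p) \<longleftrightarrow> gam p \<le> gam q \<and> agree_upto \<theta> p q (gam p)"
  unfolding Pminus_le_def agree_upto_def acc_Collect_le by simp

lemma Pminus_le_None [simp]: "Pminus_le \<theta> x None" "\<not> Pminus_le \<theta> None (Some p)"
  unfolding Pminus_le_def by auto

lemma Pminus_le_refl: "Pminus_le \<theta> x x"
  by (cases x) (simp_all add: Pminus_le_Some_iff agree_upto_def)

lemma Pminus_le_trans:
  assumes "Pminus_le \<theta> r q" "Pminus_le \<theta> q p"
  shows "Pminus_le \<theta> r p"
proof (cases p)
  case (Some p')
  then obtain q' r' where "q = Some q'" "r = Some r'"
    using assms by (cases q; cases r) auto
  with assms Some have "gam q' \<le> gam r'" "agree_upto \<theta> q' r' (gam q')"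
    and "gam p' \<le> gam q'" "agree_upto \<theta> p' q' (gam p')"
    by (simp_all add: Pminus_le_Some_iff)
  then have "gam p' \<le> gam r'" "agree_upto \<theta> p' r' (gam p')"
    using agree_upto_trans agree_upto_mono order.trans by blast+
  then show ?thesis
    using Some \<open>r = Some r'\<close> by (simp add: Pminus_le_Some_iff)
qed simp

lemma comparable_agree_upto:
  assumes "Pminus_le \<theta> (Some p) (Some q) \<or> Pminus_le \<theta> (Some q) (Some p)"
    and "b \<le> gam p" "b \<le> gam q"
  shows "agree_upto \<theta> p q b"
  using assms(1)
proof
  assume "Pminus_le \<theta> (Some p) (Some q)"
  then show ?thesis
    using agree_upto_mono[OF _ assms(3)] agree_upto_sym unfolding Pminus_le_Some_iff by blast
next
  assume "Pminus_le \<theta> (Some q) (Some p)"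
  then show ?thesis
    using agree_upto_mono[OF _ assms(2)] unfolding Pminus_le_Some_iff by blast
qed

lemma level_ok_agree_upto:
  assumes agree: "agree_upto \<theta> p q a" and ok: "level_ok \<theta> p a" and "limpt UNIV a"
  shows "level_ok \<theta> q a"
proof -
  have idx_a: "idx q a = idx p a"
    using agree_uptoD(1)[OF agree order.refl \<open>limpt UNIV a\<close>] .
  have clb_a: "clb q a i = clb p a i" if "idx p a \<le> i" "i < \<theta>" for i
    using agree_uptoD(2)[OF agree order.refl \<open>limpt UNIV a\<close> that] .
  note L = level_okD[OF ok]
  show ?thesis
  proof (rule level_okI, unfold idx_a)
    show "idx p a < \<theta>" by (rule L(1))
    show "club_in (clb q a i) a" if "idx p a \<le> i" "i < \<theta>" for i
      using L(2) clb_a that by simp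
    show "clb q a i \<subseteq> clb q a j" if "idx p a \<le> i" "i \<le> j" "j < \<theta>" for i j
      using L(3)[OF that] clb_a that by (metis order.trans le_less_trans)
    show "acc {x. x < a} = (\<Union>i\<in>{i. idx p a \<le> i \<and> i < \<theta>}. acc (clb q a i))"
      using L(4) clb_a by simp
    fix i a' assume i: "idx p a \<le> i" "i < \<theta>" and a': "a' \<in> acc (clb q a i)" "cof_ge a' \<theta>"
    then have a'_acc: "a' \<in> acc (clb p a i)"
      using clb_a by simp
    then have "a' < a" "limpt UNIV a'"
      using acc_subset club_in_subset[OF L(2)[OF i]] acc_limpt_UNIV by blast+
    moreover note L(5)[OF i a'_acc a'(2)]
    ultimately show "idx q a' \<le> i \<and> clb q a' i = clb q a i \<inter> {x. x < a'}"
      using agree_uptoD[OF agree less_imp_le] clb_a[OF i] i(2) by simp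
  qed
qed

lemma levels_cohere_agree_upto:
  assumes agree: "agree_upto \<theta> p q a" and coh: "levels_cohere \<theta> p a' a"
    and "a' < a" "limpt UNIV a'" "limpt UNIV a"
  shows "levels_cohere \<theta> q a' a"
proof -
  obtain j where j: "j < \<theta>" "idx p a \<le> j" "idx p a' \<le> j"
    and eq: "\<And>i. j \<le> i \<Longrightarrow> i < \<theta> \<Longrightarrow> clb p a' i = clb p a i \<inter> {x. x < a'}"
    using coh unfolding levels_cohere_def by blast
  note ag = agree_uptoD[OF agree]
  show ?thesis
    unfolding levels_cohere_def
  proof (intro exI[of _ j] conjI allI impI)
    show "j < \<theta>" "idx q a \<le> j" "idx q a' \<le> j"
      using j ag(1)[of a] ag(1)[of a'] assms(3-5) by auto
    fix i assume i: "j \<le> i \<and> i < \<theta>"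
    then have "idx p a \<le> i" "idx p a' \<le> i"
      using j order.trans by blast+
    then show "clb q a' i = clb q a i \<inter> {x. x < a'}"
      using eq ag(2)[of a' i] ag(2)[of a i] i assms(3-5) by simp
  qed
qed

lemma valid_condI_top:
  assumes lim: "limpt UNIV (gam r)"
    and below: "\<And>b. b < gam r \<Longrightarrow> limpt UNIV b \<Longrightarrow> \<exists>p. valid_cond \<theta> p \<and> b \<le> gam p \<and> agree_upto \<theta> p r b"
    and top: "level_ok \<theta> r (gam r)"
    and top_cohere: "\<And>a'. a' < gam r \<Longrightarrow> limpt UNIV a' \<Longrightarrow> levels_cohere \<theta> r a' (gam r)"
  shows "valid_cond \<theta> r"
proof -
  have lower: "level_ok \<theta> r a \<and> (\<forall>a'<a. limpt UNIV a' \<longrightarrow> levels_cohere \<theta> r a' a)"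
    if a: "a < gam r" "limpt UNIV a" for a
  proof -
    obtain p where p: "valid_cond \<theta> p" "a \<le> gam p" "agree_upto \<theta> p r a"
      using below a by blast
    have "level_ok \<theta> r a"
      using level_ok_agree_upto[OF p(3) valid_cond_level_ok[OF p(1,2) a(2)] a(2)] .
    moreover have "levels_cohere \<theta> r a' a" if "a' < a" "limpt UNIV a'" for a'
      using levels_cohere_agree_upto[OF p(3)
          valid_cond_levels_cohere[OF p(1) that(1) p(2) that(2) a(2)]] that a(2) .
    ultimately show ?thesis by blast
  qed
  have "level_ok \<theta> r a" if "a \<le> gam r" "limpt UNIV a" for a
    using that top lower by (cases "a = gam r") auto
  moreover have "levels_cohere \<theta> r a' a"
    if "a' < a" "a \<le> gam r" "limpt UNIV a'" "limpt UNIV a" for a' a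
    using that top_cohere lower by (cases "a = gam r") auto
  ultimately show ?thesis
    unfolding valid_cond_iff using lim by blast
qed

(* The relation kept between the moves of Player II; it makes the union of their top clubs
   a club at limit stages. *)
definition top_coherent :: "'k::wellorder \<Rightarrow> 'k pcond \<Rightarrow> 'k pcond \<Rightarrow> bool" where
  "top_coherent \<theta> p r \<longleftrightarrow> gam p < gam r \<and> (\<forall>i<\<theta>.
     clb p (gam p) i = clb r (gam r) i \<inter> {x. x < gam p} \<and> gam p \<in> clb r (gam r) i)"

lemma top_coherent_trans:
  "top_coherent \<theta> p q \<Longrightarrow> top_coherent \<theta> q r \<Longrightarrow> top_coherent \<theta> p r"
proof -
  assume pq: "top_coherent \<theta> p q" and qr: "top_coherent \<theta> q r"
  have "gam p < gam r"
    using pq qr less_trans unfolding top_coherent_def by blast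
  moreover have "clb p (gam p) i = clb r (gam r) i \<inter> {x. x < gam p}" if "i < \<theta>" for i
  proof -
    have "clb q (gam q) i = clb r (gam r) i \<inter> {x. x < gam q}"
      and "clb p (gam p) i = clb q (gam q) i \<inter> {x. x < gam p}" and "gam p < gam q"
      using pq qr that unfolding top_coherent_def by blast+
    then show ?thesis
      using Int_less_restrict by metis
  qed
  moreover have "gam p \<in> clb r (gam r) i" if "i < \<theta>" for i
    using pq qr that unfolding top_coherent_def by blast
  ultimately show ?thesis
    unfolding top_coherent_def by blast
qed

section \<open>Player II's move at successor stages\<close>

context forcing_setting
begin

definition stable_from :: "'k pcond \<Rightarrow> 'k pcond \<Rightarrow> 'k \<Rightarrow> bool" where
  "stable_from q p j \<longleftrightarrow> j < \<theta> \<and> idx q (gam q) \<le> j \<and> (\<forall>i. j \<le> i \<and> i < \<theta> \<longrightarrow>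
     clb q (gam q) i \<inter> {x. x < gam p} = clb p (gam p) i
     \<and> (gam p < gam q \<longrightarrow> gam p \<in> clb q (gam q) i))"

definition stable_index :: "'k pcond \<Rightarrow> 'k pcond option \<Rightarrow> 'k" where
  "stable_index q prev = (case prev of None \<Rightarrow> idx q (gam q) | Some p \<Rightarrow> LEAST j. stable_from q p j)"

definition extension_club :: "'k pcond \<Rightarrow> 'k pcond option \<Rightarrow> 'k \<Rightarrow> 'k set" where
  "extension_club q prev i =
     (if stable_index q prev \<le> i then clb q (gam q) i
      else case prev of None \<Rightarrow> {} | Some p \<Rightarrow> clb p (gam p) i \<union> {gam p})
     \<union> {x. gam q \<le> x \<and> x < next_limit (gam q)}"

definition extend_cond :: "'k pcond \<Rightarrow> 'k pcond option \<Rightarrow> 'k pcond" where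
  "extend_cond q prev = \<lparr>gam = next_limit (gam q), idx = (idx q)(next_limit (gam q) := ord0),
     clb = (clb q)(next_limit (gam q) := extension_club q prev)\<rparr>"

lemma stable_fromD:
  assumes "stable_from q p j" "j \<le> i" "i < \<theta>"
  shows "clb q (gam q) i \<inter> {x. x < gam p} = clb p (gam p) i
    \<and> (gam p < gam q \<longrightarrow> gam p \<in> clb q (gam q) i)"
  using assms(1)[unfolded stable_from_def, THEN conjunct2, THEN conjunct2, rule_format,
      OF conjI[OF assms(2,3)]] .

lemma extend_cond_simps [simp]:
  "gam (extend_cond q prev) = next_limit (gam q)"
  "idx (extend_cond q prev) b = (if b = next_limit (gam q) then ord0 else idx q b)"
  "clb (extend_cond q prev) b = (if b = next_limit (gam q) then extension_club q prev else clb q b)"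
  unfolding extend_cond_def by simp_all

end

(* q is Player I's move at a stage beta + 1 and prev is II's own move at beta. *)
locale successor_step = forcing_setting \<theta> for \<theta> :: "'k::wellorder" +
  fixes q :: "'k pcond" and prev :: "'k pcond option"
  assumes valid_q: "valid_cond \<theta> q"
    and valid_prev: "prev = Some p \<Longrightarrow> valid_cond \<theta> p"
    and le_prev: "prev = Some p \<Longrightarrow> Pminus_le \<theta> (Some q) (Some p)"
    and idx_prev: "prev = Some p \<Longrightarrow> idx p (gam p) = ord0"
begin

lemma prev_agree: "prev = Some p \<Longrightarrow> gam p \<le> gam q \<and> agree_upto \<theta> p q (gam p)"
  using le_prev unfolding Pminus_le_Some_iff .

lemma stable_from_exists:
  assumes "prev = Some p"
  shows "\<exists>j. stable_from q p j"
proof -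
  let ?g = "gam p" and ?d = "gam q"
  have lim_g: "limpt UNIV ?g" and lim_d: "limpt UNIV ?d"
    using valid_cond_limpt valid_prev[OF assms] valid_q by blast+
  have "?g \<le> ?d" and agree: "agree_upto \<theta> p q ?g"
    using prev_agree[OF assms] by simp_all
  note top_q = level_okD[OF valid_cond_top_level[OF valid_q]]
  have clb_g: "clb q ?g i = clb p ?g i" if "i < \<theta>" for i
    using agree_uptoD(2)[OF agree order.refl lim_g] idx_prev[OF assms] that by simp
  show ?thesis
  proof (cases "?g = ?d")
    case True
    have "clb q ?d i \<inter> {x. x < ?g} = clb p ?g i" if "idx q ?d \<le> i" "i < \<theta>" for i
      using club_in_subset[OF top_q(2)[OF that]] clb_g[OF that(2)] True by auto
    then have "stable_from q p (idx q ?d)"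
      unfolding stable_from_def using top_q(1) True by simp
    then show ?thesis ..
  next
    case False
    with \<open>?g \<le> ?d\<close> have "?g < ?d" by simp
    obtain j1 where j1: "j1 < \<theta>" "idx q ?d \<le> j1"
      and restr: "\<And>i. j1 \<le> i \<Longrightarrow> i < \<theta> \<Longrightarrow> clb q ?g i = clb q ?d i \<inter> {x. x < ?g}"
      using valid_cond_levels_cohere[OF valid_q \<open>?g < ?d\<close> order.refl lim_g lim_d]
      unfolding levels_cohere_def by blast
    have "?g \<in> acc {x. x < ?d}"
      using \<open>?g < ?d\<close> lim_g unfolding acc_Collect_less by simp
    then obtain j2 where j2: "idx q ?d \<le> j2" "j2 < \<theta>" "?g \<in> acc (clb q ?d j2)"
      unfolding top_q(4) by blast
    have "stable_from q p (max j1 j2)"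
      unfolding stable_from_def
    proof (intro conjI allI impI)
      show "max j1 j2 < \<theta>" "idx q ?d \<le> max j1 j2"
        using j1 j2 by (simp_all add: le_max_iff_disj)
      fix i assume i: "max j1 j2 \<le> i \<and> i < \<theta>"
      then show "clb q ?d i \<inter> {x. x < ?g} = clb p ?g i"
        using restr clb_g by simp
      have "clb q ?d j2 \<subseteq> clb q ?d i"
        using top_q(3) j2(1) i by simp
      then show "?g \<in> clb q ?d i"
        using j2(3) acc_subset by blast
    qed
    then show ?thesis ..
  qed
qed

lemma stable_index_spec:
  "stable_index q prev < \<theta>" "idx q (gam q) \<le> stable_index q prev"
  "prev = Some p \<Longrightarrow> stable_from q p (stable_index q prev)"
proof -
  have stable: "stable_from q p (stable_index q prev)" if "prev = Some p" for p
    unfolding stable_index_def using that LeastI_ex[OF stable_from_exists[OF that]] by simp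
  then show "prev = Some p \<Longrightarrow> stable_from q p (stable_index q prev)" .
  show "stable_index q prev < \<theta>" "idx q (gam q) \<le> stable_index q prev"
    using stable level_okD(1)[OF valid_cond_top_level[OF valid_q]]
    by (cases prev; simp add: stable_index_def stable_from_def)+
qed

lemma extension_club_stable:
  assumes "stable_index q prev \<le> i" "i < \<theta>"
  shows "extension_club q prev i = clb q (gam q) i \<union> {x. gam q \<le> x \<and> x < next_limit (gam q)}"
    and "extension_club q prev i \<inter> {x. x < gam q} = clb q (gam q) i"
    and "gam q \<in> extension_club q prev i"
proof -
  show F: "extension_club q prev i = clb q (gam q) i \<union> {x. gam q \<le> x \<and> x < next_limit (gam q)}"
    unfolding extension_club_def using assms(1) by simp
  have "club_in (clb q (gam q) i) (gam q)"
    using level_okD(2)[OF valid_cond_top_level[OF valid_q]] stable_index_spec(2) assms order.trans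
    by blast
  then show "extension_club q prev i \<inter> {x. x < gam q} = clb q (gam q) i"
    unfolding F using club_in_subset by fastforce
  show "gam q \<in> extension_club q prev i"
    unfolding F using next_limit(1) by simp
qed

lemma extension_club_unstable:
  assumes "\<not> stable_index q prev \<le> i"
  shows "prev = None \<Longrightarrow> extension_club q prev i = {x. gam q \<le> x \<and> x < next_limit (gam q)}"
    and "prev = Some p \<Longrightarrow>
      extension_club q prev i = clb p (gam p) i \<union> {gam p} \<union> {x. gam q \<le> x \<and> x < next_limit (gam q)}"
  unfolding extension_club_def using assms by simp_all

lemma extension_club_base:
  assumes "i < \<theta>" and "stable_index q prev \<le> i \<or> prev \<noteq> None"
  obtains b where "level_ok \<theta> b (gam b)" "limpt UNIV (gam b)" "idx b (gam b) \<le> i" "gam b \<le> gam q"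
    "agree_upto \<theta> b q (gam b)"
    "extension_club q prev i = clb b (gam b) i \<union> {gam b} \<union> {x. gam q \<le> x \<and> x < next_limit (gam q)}"
proof (cases "stable_index q prev \<le> i")
  case True
  have "extension_club q prev i
      = clb q (gam q) i \<union> {gam q} \<union> {x. gam q \<le> x \<and> x < next_limit (gam q)}"
    using extension_club_stable(1)[OF True assms(1)] next_limit(1) by auto
  moreover have "agree_upto \<theta> q q (gam q)"
    unfolding agree_upto_def by simp
  moreover have "idx q (gam q) \<le> i"
    using stable_index_spec(2) True by (rule order.trans)
  ultimately show ?thesis
    using that valid_cond_top_level[OF valid_q] valid_cond_limpt[OF valid_q] by blast
next
  case False
  then obtain p where p: "prev = Some p"
    using assms(2) by auto
  show ?thesis
    using that[OF valid_cond_top_level[OF valid_prev[OF p]] valid_cond_limpt[OF valid_prev[OF p]]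
        _ _ _ extension_club_unstable(2)[OF False p]] idx_prev[OF p] prev_agree[OF p]
    by simp
qed

lemma extension_club_club: "i < \<theta> \<Longrightarrow> club_in (extension_club q prev i) (next_limit (gam q))"
proof (cases "stable_index q prev \<le> i \<or> prev \<noteq> None")
  case True
  assume "i < \<theta>"
  then obtain b where b: "level_ok \<theta> b (gam b)" "limpt UNIV (gam b)" "idx b (gam b) \<le> i"
      "gam b \<le> gam q"
    and F: "extension_club q prev i
      = clb b (gam b) i \<union> {gam b} \<union> {x. gam q \<le> x \<and> x < next_limit (gam q)}"
    using True by (rule extension_club_base)
  show ?thesis
    using club_in_extend_gap(1)[OF level_okD(2)[OF b(1,3) \<open>i < \<theta>\<close>] b(2,4) next_limit(1)
        not_limpt_below_next_limit[of "gam q"]] F by simp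
next
  case False
  then show ?thesis
    using club_in_interval_gap(1)[OF next_limit(1) not_limpt_below_next_limit[of "gam q"]]
      extension_club_unstable(1) by auto
qed

lemma extension_club_acc_restrict:
  assumes "i < \<theta>" "a' \<in> acc (extension_club q prev i)" "cof_ge a' \<theta>"
  shows "idx q a' \<le> i \<and> clb q a' i = extension_club q prev i \<inter> {x. x < a'}"
proof (cases "stable_index q prev \<le> i \<or> prev \<noteq> None")
  case True
  obtain b where b: "level_ok \<theta> b (gam b)" "limpt UNIV (gam b)" "idx b (gam b) \<le> i" "gam b \<le> gam q"
    "agree_upto \<theta> b q (gam b)"
    and F: "extension_club q prev i
      = clb b (gam b) i \<union> {gam b} \<union> {x. gam q \<le> x \<and> x < next_limit (gam q)}"
    using assms(1) True by (rule extension_club_base)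
  note club = level_okD(2)[OF b(1,3) assms(1)]
  note ext = club_in_extend_gap[OF club b(2,4) next_limit(1) not_limpt_below_next_limit[of "gam q"],
      folded F]
  have "a' = gam b \<or> a' \<in> acc (clb b (gam b) i)"
    using subsetD[OF ext(2) assms(2)] by simp
  then show ?thesis
  proof
    assume a': "a' = gam b"
    have "idx q (gam b) = idx b (gam b)" "clb q (gam b) i = clb b (gam b) i"
      using agree_uptoD[OF b(5) order.refl b(2)] b(3) assms(1) by simp_all
    then show ?thesis
      using ext(3) b(3) a' by simp
  next
    assume a': "a' \<in> acc (clb b (gam b) i)"
    then have "a' < gam b" "limpt UNIV a'"
      using acc_subset club_in_subset[OF club] acc_limpt_UNIV by blast+
    have b_a': "idx b a' \<le> i" "clb b a' i = clb b (gam b) i \<inter> {x. x < a'}"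
      using level_okD(5)[OF b(1,3) assms(1) a' assms(3)] by simp_all
    have "idx q a' = idx b a'" "clb q a' i = clb b a' i"
      using agree_uptoD[OF b(5) less_imp_le[OF \<open>a' < gam b\<close>] \<open>limpt UNIV a'\<close>] b_a'(1) assms(1)
      by simp_all
    moreover have "extension_club q prev i \<inter> {x. x < a'} = clb b (gam b) i \<inter> {x. x < a'}"
      using Int_less_restrict[OF ext(3) \<open>a' < gam b\<close>] .
    ultimately show ?thesis
      using b_a' by simp
  qed
next
  case False
  then have "acc (extension_club q prev i) = {}"
    using club_in_interval_gap(2)[OF next_limit(1) not_limpt_below_next_limit[of "gam q"]]
      extension_club_unstable(1) by auto
  then show ?thesis
    using assms(2) by simp
qed

lemma extension_club_prev:
  assumes p: "prev = Some p" and "i < \<theta>"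
  shows "extension_club q prev i \<inter> {x. x < gam p} = clb p (gam p) i"
    and "gam p \<in> extension_club q prev i"
proof -
  have "gam p \<le> gam q"
    using prev_agree[OF p] by simp
  have "extension_club q prev i \<inter> {x. x < gam p} = clb p (gam p) i
    \<and> gam p \<in> extension_club q prev i"
  proof (cases "stable_index q prev \<le> i")
    case True
    note F = extension_club_stable[OF True \<open>i < \<theta>\<close>]
    note stable = stable_fromD[OF stable_index_spec(3)[OF p] True \<open>i < \<theta>\<close>]
    have "clb q (gam q) i \<inter> {x. x < gam p} = clb p (gam p) i"
      using stable by (rule conjunct1)
    moreover have "gam p < gam q \<Longrightarrow> gam p \<in> clb q (gam q) i"
      using stable[THEN conjunct2] by (rule mp)
    moreover have "{x. gam q \<le> x \<and> x < next_limit (gam q)} \<inter> {x. x < gam p} = {}"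
      using \<open>gam p \<le> gam q\<close> by (auto dest: leD less_le_trans)
    ultimately have "extension_club q prev i \<inter> {x. x < gam p} = clb p (gam p) i"
      unfolding F(1) by (simp add: Int_Un_distrib2)
    moreover have "gam p \<in> extension_club q prev i"
      using F(1,3) \<open>gam p \<le> gam q\<close> \<open>gam p < gam q \<Longrightarrow> gam p \<in> clb q (gam q) i\<close>
      by (cases "gam p = gam q") simp_all
    ultimately show ?thesis ..

  next
    case False
    have "club_in (clb p (gam p) i) (gam p)"
      using valid_cond_top_club valid_prev idx_prev p \<open>i < \<theta>\<close> by blast
    then show ?thesis
      using club_in_extend_gap(3,4)[OF _ valid_cond_limpt[OF valid_prev[OF p]] \<open>gam p \<le> gam q\<close>
          next_limit(1) not_limpt_below_next_limit[of "gam q"]]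
        extension_club_unstable(2)[OF False p] by simp
  qed
  then show "extension_club q prev i \<inter> {x. x < gam p} = clb p (gam p) i"
    and "gam p \<in> extension_club q prev i" by simp_all
qed

lemma extension_club_mono:
  assumes "i \<le> j" "j < \<theta>"
  shows "extension_club q prev i \<subseteq> extension_club q prev j"
proof (cases "stable_index q prev \<le> i")
  case True
  then have "idx q (gam q) \<le> i" "stable_index q prev \<le> j"
    using stable_index_spec(2) assms(1) order.trans by blast+
  then have "clb q (gam q) i \<subseteq> clb q (gam q) j"
    using level_okD(3)[OF valid_cond_top_level[OF valid_q]] assms by blast
  then show ?thesis
    unfolding extension_club_stable(1)[OF True le_less_trans[OF assms]]
      extension_club_stable(1)[OF \<open>stable_index q prev \<le> j\<close> assms(2)]
    by blast
next
  case False
  have interval: "{x. gam q \<le> x \<and> x < next_limit (gam q)} \<subseteq> extension_club q prev j"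
    unfolding extension_club_def by blast
  show ?thesis
  proof (cases prev)
    case None
    then show ?thesis
      using extension_club_unstable(1)[OF False] interval by simp
  next
    case (Some p)
    have "clb p (gam p) i \<subseteq> clb p (gam p) j"
      using valid_cond_top_mono valid_prev idx_prev Some assms by blast
    also have "\<dots> \<subseteq> extension_club q prev j"
      using extension_club_prev(1)[OF Some assms(2)] by (metis inf_le1)
    finally show ?thesis
      unfolding extension_club_unstable(2)[OF False Some]
      using extension_club_prev(2)[OF Some assms(2)] interval by blast
  qed
qed

lemma acc_stable_top_club:
  assumes "\<xi> \<le> gam q" "limpt UNIV \<xi>"
  obtains i where "stable_index q prev \<le> i" "i < \<theta>" "\<xi> \<in> acc (clb q (gam q) i \<union> {gam q})"
proof (cases "\<xi> = gam q")
  case True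
  let ?J = "stable_index q prev"
  have "club_in (clb q (gam q) ?J) (gam q)"
    using level_okD(2)[OF valid_cond_top_level[OF valid_q] stable_index_spec(2,1)] .
  then have "limpt (clb q (gam q) ?J \<union> {gam q}) \<xi>"
    using club_in_limpt assms(2) True limpt_mono by blast
  then show ?thesis
    using that[of ?J] True stable_index_spec(1) unfolding acc_def by blast
next
  case False
  let ?J = "stable_index q prev"
  have "\<xi> \<in> acc {x. x < gam q}"
    using assms False unfolding acc_Collect_less by simp
  then obtain i where i: "idx q (gam q) \<le> i" "i < \<theta>" "\<xi> \<in> acc (clb q (gam q) i)"
    unfolding level_okD(4)[OF valid_cond_top_level[OF valid_q]] by blast
  have "clb q (gam q) i \<subseteq> clb q (gam q) (max i ?J)"
    using level_okD(3)[OF valid_cond_top_level[OF valid_q] i(1)] i(2) stable_index_spec(1) by simp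
  then have "\<xi> \<in> acc (clb q (gam q) (max i ?J) \<union> {gam q})"
    using i(3) acc_mono by blast
  then show ?thesis
    using that[of "max i ?J"] i(2) stable_index_spec(1) by simp
qed

lemma acc_below_next_limit:
  "acc {x. x < next_limit (gam q)} = (\<Union>i\<in>{i. ord0 \<le> i \<and> i < \<theta>}. acc (extension_club q prev i))"
proof (intro equalityI subsetI)
  fix \<xi> assume "\<xi> \<in> acc {x. x < next_limit (gam q)}"
  then have \<xi>: "\<xi> < next_limit (gam q)" "limpt UNIV \<xi>"
    unfolding acc_Collect_less by simp_all
  then have "\<xi> \<le> gam q"
    using limpt_le_next_limit[OF less_imp_le[OF \<xi>(1)] \<xi>(2)] by auto
  then obtain i where i: "stable_index q prev \<le> i" "i < \<theta>" "\<xi> \<in> acc (clb q (gam q) i \<union> {gam q})"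
    using \<xi>(2) by (rule acc_stable_top_club)
  moreover have "clb q (gam q) i \<union> {gam q} \<subseteq> extension_club q prev i"
    using extension_club_stable(3)[OF i(1,2)] unfolding extension_club_stable(1)[OF i(1,2)] by simp
  ultimately have "\<xi> \<in> acc (extension_club q prev i)"
    using acc_mono by blast
  then show "\<xi> \<in> (\<Union>i\<in>{i. ord0 \<le> i \<and> i < \<theta>}. acc (extension_club q prev i))"
    using \<open>i < \<theta>\<close> by auto
next
  fix \<xi> assume "\<xi> \<in> (\<Union>i\<in>{i. ord0 \<le> i \<and> i < \<theta>}. acc (extension_club q prev i))"
  then obtain i where "i < \<theta>" "\<xi> \<in> acc (extension_club q prev i)"
    by blast
  then show "\<xi> \<in> acc {x. x < next_limit (gam q)}"
    using acc_mono[OF club_in_subset[OF extension_club_club]] by blast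
qed

lemma agree_upto_extend_cond: "agree_upto \<theta> q (extend_cond q prev) (gam q)"
  unfolding agree_upto_def using next_limit(1)[of "gam q"] by auto

lemma level_ok_extend_cond_top: "level_ok \<theta> (extend_cond q prev) (next_limit (gam q))"
proof (rule level_okI)
  show "idx (extend_cond q prev) (next_limit (gam q)) < \<theta>"
    using ord0_less_theta by simp
  show "club_in (clb (extend_cond q prev) (next_limit (gam q)) i) (next_limit (gam q))"
    if "idx (extend_cond q prev) (next_limit (gam q)) \<le> i" "i < \<theta>" for i
    using extension_club_club that(2) by simp
  show "clb (extend_cond q prev) (next_limit (gam q)) i
      \<subseteq> clb (extend_cond q prev) (next_limit (gam q)) j"
    if "idx (extend_cond q prev) (next_limit (gam q)) \<le> i" "i \<le> j" "j < \<theta>" for i j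
    using extension_club_mono that(2,3) by simp
  show "acc {x. x < next_limit (gam q)}
      = (\<Union>i\<in>{i. idx (extend_cond q prev) (next_limit (gam q)) \<le> i \<and> i < \<theta>}.
          acc (clb (extend_cond q prev) (next_limit (gam q)) i))"
    using acc_below_next_limit by simp
  fix i a'
  assume i: "idx (extend_cond q prev) (next_limit (gam q)) \<le> i" "i < \<theta>"
    and a': "a' \<in> acc (clb (extend_cond q prev) (next_limit (gam q)) i)" "cof_ge a' \<theta>"
  then have "a' \<in> acc (extension_club q prev i)"
    by simp
  moreover from this have "a' \<noteq> next_limit (gam q)"
    using acc_subset club_in_subset[OF extension_club_club[OF i(2)]] by blast
  ultimately show "idx (extend_cond q prev) a' \<le> i \<and>
      clb (extend_cond q prev) a' i = clb (extend_cond q prev) (next_limit (gam q)) i \<inter> {x. x < a'}"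
    using extension_club_acc_restrict[OF i(2) _ a'(2)] by simp
qed

lemma levels_cohere_extend_cond_top:
  assumes "a' < next_limit (gam q)" "limpt UNIV a'"
  shows "levels_cohere \<theta> (extend_cond q prev) a' (next_limit (gam q))"
proof -
  let ?J = "stable_index q prev"
  have "a' \<le> gam q"
    using limpt_le_next_limit[OF less_imp_le] assms by blast
  have a'_ne: "a' \<noteq> next_limit (gam q)"
    using assms(1) by simp
  obtain j where j: "j < \<theta>" "idx q a' \<le> j" "?J \<le> j"
    and restr: "\<And>i. j \<le> i \<Longrightarrow> i < \<theta> \<Longrightarrow> clb q a' i = extension_club q prev i \<inter> {x. x < a'}"
  proof (cases "a' = gam q")
    case True
    then show ?thesis
      using that[of ?J] stable_index_spec(1,2) extension_club_stable(2) by simp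
  next
    case False
    with \<open>a' \<le> gam q\<close> have "a' < gam q" by simp
    obtain j1 where j1: "j1 < \<theta>" "idx q a' \<le> j1"
      and eq: "\<And>i. j1 \<le> i \<Longrightarrow> i < \<theta> \<Longrightarrow> clb q a' i = clb q (gam q) i \<inter> {x. x < a'}"
      using valid_cond_levels_cohere[OF valid_q \<open>a' < gam q\<close> order.refl assms(2)
          valid_cond_limpt[OF valid_q]]
      unfolding levels_cohere_def by blast
    have "clb q a' i = extension_club q prev i \<inter> {x. x < a'}" if "max j1 ?J \<le> i" "i < \<theta>" for i
      using eq[of i] Int_less_restrict[OF extension_club_stable(2) \<open>a' < gam q\<close>, of i] that by simp
    then show ?thesis
      using that[of "max j1 ?J"] j1 stable_index_spec(1) by (simp add: le_max_iff_disj)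
  qed
  show ?thesis
    unfolding levels_cohere_def
    using j restr a'_ne by (intro exI[of _ j]) simp
qed

lemma valid_extend_cond: "valid_cond \<theta> (extend_cond q prev)"
proof (rule valid_condI_top)
  show "limpt UNIV (gam (extend_cond q prev))"
    using next_limit(2) by simp
  show "level_ok \<theta> (extend_cond q prev) (gam (extend_cond q prev))"
    using level_ok_extend_cond_top by simp
  show "levels_cohere \<theta> (extend_cond q prev) a' (gam (extend_cond q prev))"
    if "a' < gam (extend_cond q prev)" "limpt UNIV a'" for a'
    using levels_cohere_extend_cond_top that by simp
  fix b assume "b < gam (extend_cond q prev)" "limpt UNIV b"
  then have "b \<le> gam q"
    using limpt_le_next_limit[OF less_imp_le] by fastforce
  then show "\<exists>p. valid_cond \<theta> p \<and> b \<le> gam p \<and> agree_upto \<theta> p (extend_cond q prev) b"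
    using valid_q agree_upto_mono[OF agree_upto_extend_cond] by blast
qed

lemma extend_cond_le: "Pminus_le \<theta> (Some (extend_cond q prev)) (Some q)"
  unfolding Pminus_le_Some_iff using next_limit(1) agree_upto_extend_cond by (simp add: less_imp_le)

lemma top_coherent_extend_cond:
  assumes "prev = Some p"
  shows "top_coherent \<theta> p (extend_cond q prev)"
proof -
  have "gam p < next_limit (gam q)"
    using prev_agree[OF assms] next_limit(1) by (blast intro: le_less_trans)
  then show ?thesis
    unfolding top_coherent_def using extension_club_prev[OF assms] by simp
qed

end

section \<open>Player II's move at limit stages\<close>

definition sup_gam :: "'k::wellorder pcond set \<Rightarrow> 'k" where
  "sup_gam S = (LEAST u. \<forall>p\<in>S. gam p < u)"

definition cover :: "'k::wellorder pcond set \<Rightarrow> 'k \<Rightarrow> 'k pcond" where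
  "cover S \<xi> = (SOME p. p \<in> S \<and> \<xi> \<le> gam p)"

definition top_union :: "'k::wellorder pcond set \<Rightarrow> 'k \<Rightarrow> 'k set" where
  "top_union E i = (\<Union>p\<in>E. clb p (gam p) i)"

(* Below the supremum, levels are copied from any condition of S reaching them; all of these
   agree there because S is a chain. *)
definition limit_cond :: "'k::wellorder pcond set \<Rightarrow> 'k pcond set \<Rightarrow> 'k pcond" where
  "limit_cond S E = \<lparr>gam = sup_gam S,
     idx = (\<lambda>\<xi>. if \<xi> = sup_gam S then ord0 else idx (cover S \<xi>) \<xi>),
     clb = (\<lambda>\<xi>. if \<xi> = sup_gam S then top_union E else clb (cover S \<xi>) \<xi>)\<rparr>"

lemma limit_cond_simps [simp]:
  "gam (limit_cond S E) = sup_gam S"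
  "idx (limit_cond S E) b = (if b = sup_gam S then ord0 else idx (cover S b) b)"
  "clb (limit_cond S E) b = (if b = sup_gam S then top_union E else clb (cover S b) b)"
  unfolding limit_cond_def by simp_all

lemma Collect_less_mono: "(a::'a::order) \<le> b \<Longrightarrow> {x. x < a} \<subseteq> {x. x < b}"
  by (auto intro: less_le_trans)

(* S is the set of moves made before a limit stage, E the set of moves of II among them. *)
locale limit_step = forcing_setting \<theta> for \<theta> :: "'k::wellorder" +
  fixes S E :: "'k pcond set"
  assumes valid_S: "p \<in> S \<Longrightarrow> valid_cond \<theta> p"
    and S_nonempty: "S \<noteq> {}"
    and S_chain: "p \<in> S \<Longrightarrow> p' \<in> S \<Longrightarrow> Pminus_le \<theta> (Some p) (Some p') \<or> Pminus_le \<theta> (Some p') (Some p)"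
    and E_subset: "E \<subseteq> S"
    and idx_E: "p \<in> E \<Longrightarrow> idx p (gam p) = ord0"
    and E_coherent: "p \<in> E \<Longrightarrow> p' \<in> E \<Longrightarrow> gam p < gam p' \<Longrightarrow> top_coherent \<theta> p p'"
    and E_cofinal: "p \<in> S \<Longrightarrow> \<exists>p'\<in>E. gam p < gam p'"
    and S_bounded: "\<exists>u. \<forall>p\<in>S. gam p < u"
begin

lemma gam_less_sup: "p \<in> S \<Longrightarrow> gam p < sup_gam S"
  unfolding sup_gam_def using LeastI_ex[OF S_bounded] by blast

lemma E_above: 
  assumes "b < sup_gam S"
  obtains p where "p \<in> E" "b < gam p"
proof -
  have "\<exists>p\<in>S. b \<le> gam p"
    using assms not_less_Least[of b] unfolding sup_gam_def by (fastforce simp: not_le)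
  then show ?thesis
    using that E_cofinal le_less_trans by metis
qed

lemma limpt_sup_gam: "limpt UNIV (sup_gam S)"
  unfolding limpt_def
proof (intro conjI allI impI)
  show "\<exists>b. b < sup_gam S"
    using S_nonempty gam_less_sup by blast
  fix b assume "b < sup_gam S"
  then obtain p where "p \<in> E" "b < gam p"
    by (rule E_above)
  then show "\<exists>a\<in>UNIV. b < a \<and> a < sup_gam S"
    using gam_less_sup E_subset by blast
qed

lemma cover_reaches: "b < sup_gam S \<Longrightarrow> cover S b \<in> S \<and> b \<le> gam (cover S b)"
  unfolding cover_def using E_above E_subset
  by (metis (mono_tags, lifting) less_imp_le someI subsetD)

lemma agree_upto_limit_cond: "p \<in> S \<Longrightarrow> agree_upto \<theta> p (limit_cond S E) (gam p)"
proof -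
  assume "p \<in> S"
  have "agree_upto \<theta> p (cover S b) b" if "b \<le> gam p" for b
  proof -
    have "b < sup_gam S"
      using that gam_less_sup[OF \<open>p \<in> S\<close>] by (rule le_less_trans)
    then show ?thesis
      using comparable_agree_upto[OF S_chain[OF \<open>p \<in> S\<close>]] cover_reaches that by blast
  qed
  moreover have "b \<noteq> sup_gam S" if "b \<le> gam p" for b
    using that gam_less_sup[OF \<open>p \<in> S\<close>] by simp
  ultimately show ?thesis
    unfolding agree_upto_def by simp
qed

lemma top_union_restrict:
  assumes "p \<in> E" "i < \<theta>"
  shows "top_union E i \<inter> {x. x < gam p} = clb p (gam p) i"
proof (intro equalityI subsetI)
  fix x assume "x \<in> top_union E i \<inter> {x. x < gam p}"
  then obtain p' where p': "p' \<in> E" "x \<in> clb p' (gam p') i" "x < gam p"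
    unfolding top_union_def by blast
  consider "gam p' < gam p" | "gam p' = gam p" | "gam p < gam p'"
    by fastforce
  then show "x \<in> clb p (gam p) i"
  proof cases
    case 1
    then show ?thesis
      using E_coherent[OF p'(1) assms(1)] assms(2) p'(2) unfolding top_coherent_def by blast
  next
    case 2
    have "agree_upto \<theta> p p' (gam p)"
      using comparable_agree_upto S_chain E_subset assms(1) p'(1) 2 by (metis order.refl subsetD)
    then have "clb p' (gam p) i = clb p (gam p) i"
      using agree_uptoD(2) valid_cond_limpt valid_S E_subset idx_E assms
      by (metis order.refl ord0_le subsetD)
    then show ?thesis
      using p'(2) 2 by simp
  next
    case 3
    then have "clb p (gam p) i = clb p' (gam p') i \<inter> {x. x < gam p}"
      using E_coherent[OF assms(1) p'(1)] assms(2) unfolding top_coherent_def by blast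
    then show ?thesis
      using p'(2,3) by simp
  qed
next
  fix x assume "x \<in> clb p (gam p) i"
  moreover have "club_in (clb p (gam p) i) (gam p)"
    using valid_cond_top_club valid_S E_subset idx_E assms by blast
  ultimately show "x \<in> top_union E i \<inter> {x. x < gam p}"
    unfolding top_union_def using assms(1) club_in_subset by blast
qed

lemma top_union_subset: "i < \<theta> \<Longrightarrow> top_union E i \<subseteq> {x. x < sup_gam S}"
proof
  fix x assume "i < \<theta>" "x \<in> top_union E i"
  then obtain p where "p \<in> E" "x \<in> clb p (gam p) i"
    unfolding top_union_def by blast
  then have "x < gam p"
    using valid_cond_top_club valid_S E_subset idx_E \<open>i < \<theta>\<close> club_in_subset by blast
  then show "x \<in> {x. x < sup_gam S}"
    using gam_less_sup E_subset \<open>p \<in> E\<close> less_trans by blast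
qed

lemma top_union_club: "i < \<theta> \<Longrightarrow> club_in (top_union E i) (sup_gam S)"
  unfolding club_in_def
proof (intro conjI allI impI)
  assume i: "i < \<theta>"
  then show "top_union E i \<subseteq> {x. x < sup_gam S}"
    by (rule top_union_subset)
  fix b assume "b < sup_gam S"
  then obtain p where p: "p \<in> E" "b < gam p"
    by (rule E_above)
  have club: "club_in (clb p (gam p) i) (gam p)"
    using valid_cond_top_club valid_S E_subset idx_E p(1) i by blast
  then obtain c where "c \<in> clb p (gam p) i" "b \<le> c"
    using p(2) unfolding club_in_def by blast
  with p(1) show "\<exists>c\<in>top_union E i. b \<le> c"
    unfolding top_union_def by auto
  assume "limpt (top_union E i) b"
  moreover have "top_union E i \<inter> {x. x < b} \<subseteq> top_union E i \<inter> {x. x < gam p}"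
    using Collect_less_mono[OF less_imp_le[OF p(2)]] by blast
  then have "top_union E i \<inter> {x. x < b} \<subseteq> clb p (gam p) i"
    unfolding top_union_restrict[OF p(1) i] .
  ultimately have "limpt (clb p (gam p) i) b"
    by (rule limpt_restrict)
  then have "b \<in> clb p (gam p) i"
    using club p(2) unfolding club_in_def by blast
  then show "b \<in> top_union E i"
    using p(1) unfolding top_union_def by blast
qed

lemma top_union_mono:
  assumes "i \<le> j" "j < \<theta>"
  shows "top_union E i \<subseteq> top_union E j"
  unfolding top_union_def
proof (rule UN_mono)
  fix p assume "p \<in> E"
  then show "clb p (gam p) i \<subseteq> clb p (gam p) j"
    using valid_cond_top_mono[OF valid_S idx_E assms] E_subset by blast
qed simp

lemma acc_below_sup_gam:
  "acc {x. x < sup_gam S} = (\<Union>i\<in>{i. ord0 \<le> i \<and> i < \<theta>}. acc (top_union E i))"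
proof (intro equalityI subsetI)
  fix \<xi> assume "\<xi> \<in> acc {x. x < sup_gam S}"
  then have "\<xi> < sup_gam S" "limpt UNIV \<xi>"
    unfolding acc_Collect_less by simp_all
  obtain p where p: "p \<in> E" "\<xi> < gam p"
    using \<open>\<xi> < sup_gam S\<close> by (rule E_above)
  then have "\<xi> \<in> acc {x. x < gam p}"
    using \<open>limpt UNIV \<xi>\<close> unfolding acc_Collect_less by simp
  then obtain i where i: "i < \<theta>" "\<xi> \<in> acc (clb p (gam p) i)"
    unfolding level_okD(4)[OF valid_cond_top_level[OF valid_S[OF subsetD[OF E_subset p(1)]]]]
    by blast
  moreover have "clb p (gam p) i \<subseteq> top_union E i"
    unfolding top_union_def using p(1) by blast
  ultimately have "\<xi> \<in> acc (top_union E i)"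
    using acc_mono by blast
  then show "\<xi> \<in> (\<Union>i\<in>{i. ord0 \<le> i \<and> i < \<theta>}. acc (top_union E i))"
    using \<open>i < \<theta>\<close> by auto
next
  fix \<xi> assume "\<xi> \<in> (\<Union>i\<in>{i. ord0 \<le> i \<and> i < \<theta>}. acc (top_union E i))"
  then obtain i where "i < \<theta>" "\<xi> \<in> acc (top_union E i)"
    by blast
  then show "\<xi> \<in> acc {x. x < sup_gam S}"
    using acc_mono[OF top_union_subset] by blast
qed

lemma top_union_acc_restrict:
  assumes i: "i < \<theta>" and a': "a' \<in> acc (top_union E i)" "cof_ge a' \<theta>"
  shows "idx (limit_cond S E) a' \<le> i \<and> clb (limit_cond S E) a' i = top_union E i \<inter> {x. x < a'}"
proof -
  have "a' < sup_gam S"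
    using a'(1) acc_subset top_union_subset[OF i] by blast
  then obtain p where p: "p \<in> E" "a' < gam p"
    by (rule E_above)
  note restrict = top_union_restrict[OF p(1) i]
  have "a' \<in> top_union E i \<inter> {x. x < gam p}"
    using a'(1) acc_subset p(2) by blast
  moreover have "top_union E i \<inter> {x. x < a'} \<subseteq> top_union E i \<inter> {x. x < gam p}"
    using Collect_less_mono[OF less_imp_le[OF p(2)]] by blast
  moreover have "limpt (top_union E i) a'"
    using a'(1) unfolding acc_def by simp
  ultimately have a'_acc: "a' \<in> acc (clb p (gam p) i)"
    unfolding restrict acc_def by (blast intro: limpt_restrict)
  have "valid_cond \<theta> p"
    using valid_S E_subset p(1) by blast
  have p_a': "idx p a' \<le> i" "clb p a' i = clb p (gam p) i \<inter> {x. x < a'}"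
    using level_okD(5)[OF valid_cond_top_level[OF \<open>valid_cond \<theta> p\<close>] _ i a'_acc a'(2)] idx_E[OF p(1)]
    by simp_all
  note agree = agree_uptoD[OF agree_upto_limit_cond[OF subsetD[OF E_subset p(1)]]
      less_imp_le[OF p(2)] acc_limpt_UNIV[OF a'_acc]]
  have "idx (limit_cond S E) a' = idx p a'" "clb (limit_cond S E) a' i = clb p a' i"
    using agree(1) agree(2)[OF p_a'(1) i] by simp_all
  moreover have "top_union E i \<inter> {x. x < a'} = clb p (gam p) i \<inter> {x. x < a'}"
    using Int_less_restrict[OF restrict p(2)] .
  ultimately show ?thesis
    using p_a' by simp
qed

lemma level_ok_limit_cond_top: "level_ok \<theta> (limit_cond S E) (sup_gam S)"
  by (rule level_okI)
    (use ord0_less_theta top_union_club top_union_mono acc_below_sup_gam top_union_acc_restrict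
      in simp_all)

lemma levels_cohere_limit_cond_top:
  assumes "a' < sup_gam S" "limpt UNIV a'"
  shows "levels_cohere \<theta> (limit_cond S E) a' (sup_gam S)"
proof -
  obtain p where p: "p \<in> E" "a' < gam p"
    using assms(1) by (rule E_above)
  have "valid_cond \<theta> p"
    using valid_S E_subset p(1) by blast
  obtain j where j: "j < \<theta>" "idx p a' \<le> j"
    and eq: "\<And>i. j \<le> i \<Longrightarrow> i < \<theta> \<Longrightarrow> clb p a' i = clb p (gam p) i \<inter> {x. x < a'}"
    using valid_cond_levels_cohere[OF \<open>valid_cond \<theta> p\<close> p(2) order.refl assms(2)
        valid_cond_limpt[OF \<open>valid_cond \<theta> p\<close>]]
    unfolding levels_cohere_def by blast
  note agree = agree_uptoD[OF agree_upto_limit_cond[OF subsetD[OF E_subset p(1)]]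
      less_imp_le[OF p(2)] assms(2)]
  show ?thesis
    unfolding levels_cohere_def
  proof (intro exI[of _ j] conjI allI impI)
    show "j < \<theta>" "idx (limit_cond S E) (sup_gam S) \<le> j" "idx (limit_cond S E) a' \<le> j"
      using j agree(1) by simp_all
    fix i assume i: "j \<le> i \<and> i < \<theta>"
    then have "idx p a' \<le> i"
      using j(2) order.trans by blast
    then show "clb (limit_cond S E) a' i = clb (limit_cond S E) (sup_gam S) i \<inter> {x. x < a'}"
      using eq agree(2) i Int_less_restrict[OF top_union_restrict[OF p(1)] p(2)] assms(1) by simp
  qed
qed

lemma valid_limit_cond: "valid_cond \<theta> (limit_cond S E)"
proof (rule valid_condI_top)
  show "limpt UNIV (gam (limit_cond S E))"
    using limpt_sup_gam by simp
  show "level_ok \<theta> (limit_cond S E) (gam (limit_cond S E))"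
    using level_ok_limit_cond_top by simp
  show "levels_cohere \<theta> (limit_cond S E) a' (gam (limit_cond S E))"
    if "a' < gam (limit_cond S E)" "limpt UNIV a'" for a'
    using levels_cohere_limit_cond_top that by simp
  fix b assume "b < gam (limit_cond S E)"
  then have "cover S b \<in> S" "b \<le> gam (cover S b)"
    using cover_reaches by simp_all
  then show "\<exists>p. valid_cond \<theta> p \<and> b \<le> gam p \<and> agree_upto \<theta> p (limit_cond S E) b"
    using valid_S agree_upto_mono[OF agree_upto_limit_cond] by blast
qed

lemma limit_cond_le: "p \<in> S \<Longrightarrow> Pminus_le \<theta> (Some (limit_cond S E)) (Some p)"
  unfolding Pminus_le_Some_iff using gam_less_sup agree_upto_limit_cond by (simp add: less_imp_le)

lemma top_coherent_limit_cond:
  assumes "p \<in> E"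
  shows "top_coherent \<theta> p (limit_cond S E)"
proof -
  have "gam p \<in> top_union E i" if "i < \<theta>" for i
  proof -
    obtain p' where "p' \<in> E" "gam p < gam p'"
      using E_cofinal E_subset assms by blast
    then show ?thesis
      using E_coherent[OF assms] that unfolding top_coherent_def top_union_def by blast
  qed
  moreover have "gam p < sup_gam S"
    using gam_less_sup E_subset assms by blast
  ultimately show ?thesis
    unfolding top_coherent_def using top_union_restrict[OF assms] by simp
qed

end

section \<open>The winning strategy\<close>

lemma restr_less [simp]: "\<eta> < \<alpha> \<Longrightarrow> restr s one \<alpha> \<eta> = s \<eta>"
  unfolding restr_def by simp

context forcing_setting
begin

(* II plays the trivial condition until Player I leaves it. *)
definition strategy :: "'k \<Rightarrow> ('k \<Rightarrow> 'k pcond option) \<Rightarrow> 'k pcond option" where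
  "strategy \<alpha> s = (if \<forall>\<eta><\<alpha>. s \<eta> = None then None
     else if zero_or_limit \<alpha>
     then Some (limit_cond {p. \<exists>\<eta><\<alpha>. s \<eta> = Some p} {p. \<exists>\<eta><\<alpha>. ord_even \<eta> \<and> s \<eta> = Some p})
     else Some (extend_cond (the (s (opred \<alpha>))) (s (opred (opred \<alpha>)))))"

definition lower_bound :: "('k \<Rightarrow> 'k pcond option) \<Rightarrow> 'k \<Rightarrow> 'k pcond option \<Rightarrow> bool" where
  "lower_bound s \<alpha> x \<longleftrightarrow> x \<in> Pminus \<theta> \<and> (\<forall>\<eta><\<alpha>. Pminus_le \<theta> x (s \<eta>))"

definition even_move_ok :: "('k \<Rightarrow> 'k pcond option) \<Rightarrow> 'k \<Rightarrow> 'k pcond option \<Rightarrow> bool" where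
  "even_move_ok s \<alpha> x \<longleftrightarrow> (case x of
       None \<Rightarrow> \<forall>\<eta><\<alpha>. s \<eta> = None
     | Some p \<Rightarrow> idx p (gam p) = ord0 \<and> (\<forall>\<eta><\<alpha>. \<forall>q. s \<eta> = Some q \<longrightarrow> gam q < gam p)
         \<and> (\<forall>\<eta><\<alpha>. ord_even \<eta> \<longrightarrow> (\<forall>p'. s \<eta> = Some p' \<longrightarrow> top_coherent \<theta> p' p)))"

definition move_ok :: "('k \<Rightarrow> 'k pcond option) \<Rightarrow> 'k \<Rightarrow> bool" where
  "move_ok s \<beta> \<longleftrightarrow> lower_bound s \<beta> (s \<beta>) \<and> (ord_even \<beta> \<longrightarrow> even_move_ok s \<beta> (s \<beta>))"

lemma strategy_restr:
  assumes "ord_even \<alpha>"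
  shows "strategy \<alpha> (restr s one \<alpha>) = strategy \<alpha> s"
proof (cases "zero_or_limit \<alpha>")
  case True
  have "{p. \<exists>\<eta><\<alpha>. restr s one \<alpha> \<eta> = Some p} = {p. \<exists>\<eta><\<alpha>. s \<eta> = Some p}"
    "{p. \<exists>\<eta><\<alpha>. ord_even \<eta> \<and> restr s one \<alpha> \<eta> = Some p} = {p. \<exists>\<eta><\<alpha>. ord_even \<eta> \<and> s \<eta> = Some p}"
    by auto
  with True show ?thesis
    unfolding strategy_def by simp
next
  case False
  then obtain \<beta> where "\<alpha> = osucc (osucc \<beta>)"
    using ord_even_not_limit assms by blast
  then have "opred \<alpha> < \<alpha>" "opred (opred \<alpha>) < \<alpha>"
    using less_osucc less_trans[OF less_osucc less_osucc] by simp_all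
  with False show ?thesis
    unfolding strategy_def by simp
qed

end

locale play = forcing_setting \<theta> for \<theta> :: "'k::wellorder" +
  fixes s :: "'k \<Rightarrow> 'k pcond option" and \<alpha> :: 'k
  assumes even_\<alpha>: "ord_even \<alpha>"
    and moves_ok: "\<beta> < \<alpha> \<Longrightarrow> move_ok s \<beta>"
begin

lemma move_valid: "\<beta> < \<alpha> \<Longrightarrow> s \<beta> = Some p \<Longrightarrow> valid_cond \<theta> p"
  using moves_ok unfolding move_ok_def lower_bound_def by fastforce

lemma move_le: "\<beta> < \<alpha> \<Longrightarrow> \<eta> < \<beta> \<Longrightarrow> Pminus_le \<theta> (s \<beta>) (s \<eta>)"
  using moves_ok unfolding move_ok_def lower_bound_def by blast

lemma even_move: "\<beta> < \<alpha> \<Longrightarrow> ord_even \<beta> \<Longrightarrow> even_move_ok s \<beta> (s \<beta>)"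
  using moves_ok unfolding move_ok_def by blast

lemma moves_comparable:
  assumes "\<eta> < \<alpha>" "\<eta>' < \<alpha>" "s \<eta> = Some p" "s \<eta>' = Some p'"
  shows "Pminus_le \<theta> (Some p) (Some p') \<or> Pminus_le \<theta> (Some p') (Some p)"
  using move_le[of \<eta> \<eta>'] move_le[of \<eta>' \<eta>] Pminus_le_refl assms
  by (cases \<eta> \<eta>' rule: linorder_cases) auto

lemma strategy_trivial:
  assumes "\<forall>\<eta><\<alpha>. s \<eta> = None"
  shows "lower_bound s \<alpha> (strategy \<alpha> s) \<and> even_move_ok s \<alpha> (strategy \<alpha> s)"
  using assms unfolding strategy_def lower_bound_def even_move_ok_def by simp

lemma even_move_Some:
  assumes "\<eta> < \<alpha>" "ord_even \<eta>" "s \<eta> = Some p"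
  shows "idx p (gam p) = ord0" "\<eta>' < \<eta> \<Longrightarrow> s \<eta>' = Some q \<Longrightarrow> gam q < gam p"
    "\<eta>' < \<eta> \<Longrightarrow> ord_even \<eta>' \<Longrightarrow> s \<eta>' = Some p' \<Longrightarrow> top_coherent \<theta> p' p"
  using even_move[OF assms(1,2)] assms(3) unfolding even_move_ok_def by simp_all

lemma even_move_None:
  assumes "\<eta> < \<alpha>" "ord_even \<eta>" "s \<eta> = None" "\<eta>' < \<eta>"
  shows "s \<eta>' = None"
  using even_move[OF assms(1,2)] assms(3,4) unfolding even_move_ok_def by simp

lemma even_moves_top_coherent:
  assumes \<eta>: "\<eta> < \<alpha>" "ord_even \<eta>" "s \<eta> = Some p" and \<eta>': "\<eta>' < \<alpha>" "ord_even \<eta>'" "s \<eta>' = Some p'"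
    and "gam p < gam p'"
  shows "top_coherent \<theta> p p'"
proof -
  have "\<not> \<eta>' < \<eta>"
    using even_move_Some(2)[OF \<eta> _ \<eta>'(3)] \<open>gam p < gam p'\<close> less_asym by blast
  moreover have "\<eta> \<noteq> \<eta>'"
    using \<eta>(3) \<eta>'(3) \<open>gam p < gam p'\<close> by auto
  ultimately have "\<eta> < \<eta>'"
    by simp
  then show ?thesis
    using even_move_Some(3)[OF \<eta>' _ \<eta>(2,3)] by blast
qed

lemma even_moves_cofinal:
  assumes "zero_or_limit \<alpha>" "\<eta> < \<alpha>" "s \<eta> = Some p"
  obtains \<eta>2 p2 where "\<eta>2 < \<alpha>" "ord_even \<eta>2" "s \<eta>2 = Some p2" "gam p < gam p2"
proof -
  obtain \<eta>' where \<eta>': "ord_even \<eta>'" "\<eta> \<le> \<eta>'" "\<eta>' < \<alpha>"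
    using ord_even_cofinal[OF assms(1,2)] by blast
  define \<eta>2 where "\<eta>2 = osucc (osucc \<eta>')"
  have "ord_even \<eta>2"
    unfolding \<eta>2_def using \<eta>'(1) by (rule ord_even_osucc_osucc)
  moreover have "\<eta>2 < \<alpha>"
    unfolding \<eta>2_def
    using zero_or_limit_osucc_less[OF assms(1) zero_or_limit_osucc_less[OF assms(1) \<eta>'(3)]] .
  moreover have "\<eta> < \<eta>2"
    unfolding \<eta>2_def using le_less_trans[OF \<eta>'(2) less_trans[OF less_osucc less_osucc]] .
  moreover obtain p2 where "s \<eta>2 = Some p2"
    using even_move_None[OF \<open>\<eta>2 < \<alpha>\<close> \<open>ord_even \<eta>2\<close> _ \<open>\<eta> < \<eta>2\<close>] assms(3) by fastforce
  ultimately show ?thesis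
    using that even_move_Some(2)[OF \<open>\<eta>2 < \<alpha>\<close> \<open>ord_even \<eta>2\<close>] \<open>\<eta> < \<eta>2\<close> assms(3) by blast
qed

lemma moves_bounded: "\<exists>u. \<forall>p\<in>{p. \<exists>\<eta><\<alpha>. s \<eta> = Some p}. gam p < u"
proof -
  have "gam ` {p. \<exists>\<eta><\<alpha>. s \<eta> = Some p} \<subseteq> (\<lambda>\<eta>. gam (the (s \<eta>))) ` {x. x < \<alpha>}"
    by force
  then have "gam ` {p. \<exists>\<eta><\<alpha>. s \<eta> = Some p} \<lesssim> {x. x < \<alpha>}"
    by (rule subset_image_lepoll)
  then show ?thesis
    using small_bounded by blast
qed

lemma limit_step_played:
  assumes "zero_or_limit \<alpha>" "\<exists>\<eta><\<alpha>. s \<eta> \<noteq> None"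
  shows "limit_step \<theta> {p. \<exists>\<eta><\<alpha>. s \<eta> = Some p} {p. \<exists>\<eta><\<alpha>. ord_even \<eta> \<and> s \<eta> = Some p}"
proof (rule limit_step.intro[OF forcing_setting_axioms limit_step_axioms.intro])
  let ?S = "{p. \<exists>\<eta><\<alpha>. s \<eta> = Some p}" and ?E = "{p. \<exists>\<eta><\<alpha>. ord_even \<eta> \<and> s \<eta> = Some p}"
  show "valid_cond \<theta> p" if "p \<in> ?S" for p
    using that move_valid by blast
  show "?S \<noteq> {}"
    using assms(2) by blast
  show "Pminus_le \<theta> (Some p) (Some p') \<or> Pminus_le \<theta> (Some p') (Some p)"
    if "p \<in> ?S" "p' \<in> ?S" for p p'
    using that moves_comparable by blast
  show "?E \<subseteq> ?S"
    by blast
  show "idx p (gam p) = ord0" if "p \<in> ?E" for p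
    using that even_move_Some(1) by blast
  show "top_coherent \<theta> p p'" if "p \<in> ?E" "p' \<in> ?E" "gam p < gam p'" for p p'
    using that even_moves_top_coherent by blast
  show "\<exists>p'\<in>?E. gam p < gam p'" if "p \<in> ?S" for p
    using that even_moves_cofinal[OF assms(1)] by blast
  show "\<exists>u. \<forall>p\<in>?S. gam p < u"
    by (rule moves_bounded)
qed

lemma strategy_limit:
  assumes "zero_or_limit \<alpha>" "\<exists>\<eta><\<alpha>. s \<eta> \<noteq> None"
  shows "lower_bound s \<alpha> (strategy \<alpha> s) \<and> even_move_ok s \<alpha> (strategy \<alpha> s)"
proof -
  let ?S = "{p. \<exists>\<eta><\<alpha>. s \<eta> = Some p}" and ?E = "{p. \<exists>\<eta><\<alpha>. ord_even \<eta> \<and> s \<eta> = Some p}"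
  interpret limit_step \<theta> ?S ?E
    using assms by (rule limit_step_played)
  have "strategy \<alpha> s = Some (limit_cond ?S ?E)"
    using assms unfolding strategy_def by auto
  moreover have "Pminus_le \<theta> (Some (limit_cond ?S ?E)) (s \<eta>)" if "\<eta> < \<alpha>" for \<eta>
    using that limit_cond_le by (cases "s \<eta>") auto
  ultimately show ?thesis
    unfolding lower_bound_def even_move_ok_def
    using valid_limit_cond gam_less_sup top_coherent_limit_cond by auto
qed

lemma successor_step_played:
  assumes "\<alpha> = osucc (osucc \<beta>)" "ord_even \<beta>" "s (osucc \<beta>) = Some q"
  shows "successor_step \<theta> q (s \<beta>)"
proof (rule successor_step.intro[OF forcing_setting_axioms successor_step_axioms.intro])
  have "osucc \<beta> < \<alpha>" "\<beta> < osucc \<beta>" "\<beta> < \<alpha>"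
    using assms(1) less_osucc less_trans by blast+
  then show "valid_cond \<theta> q"
    using move_valid assms(3) by blast
  fix p assume p: "s \<beta> = Some p"
  show "valid_cond \<theta> p"
    using move_valid \<open>\<beta> < \<alpha>\<close> p by blast
  show "Pminus_le \<theta> (Some q) (Some p)"
    using move_le[OF \<open>osucc \<beta> < \<alpha>\<close> \<open>\<beta> < osucc \<beta>\<close>] assms(3) p by simp
  show "idx p (gam p) = ord0"
    using even_move[OF \<open>\<beta> < \<alpha>\<close> assms(2)] p unfolding even_move_ok_def by simp
qed

lemma last_move:
  assumes "\<alpha> = osucc (osucc \<beta>)" "\<exists>\<eta><\<alpha>. s \<eta> \<noteq> None"
  obtains q where "s (osucc \<beta>) = Some q" "\<And>\<eta>. \<eta> < \<alpha> \<Longrightarrow> Pminus_le \<theta> (Some q) (s \<eta>)"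
proof -
  have le_last: "Pminus_le \<theta> (s (osucc \<beta>)) (s \<eta>)" if "\<eta> < \<alpha>" for \<eta>
  proof (cases "\<eta> = osucc \<beta>")
    case False
    then have "\<eta> < osucc \<beta>"
      using that assms(1) less_osucc_iff by (simp add: le_less)
    then show ?thesis
      using move_le assms(1) less_osucc by blast
  qed (simp add: Pminus_le_refl)
  then obtain q where "s (osucc \<beta>) = Some q"
    using assms(2) by (metis Pminus_le_None(2) not_Some_eq)
  with le_last show ?thesis
    using that by simp
qed

lemma strategy_successor:
  assumes "\<not> zero_or_limit \<alpha>" "\<exists>\<eta><\<alpha>. s \<eta> \<noteq> None"
  shows "lower_bound s \<alpha> (strategy \<alpha> s) \<and> even_move_ok s \<alpha> (strategy \<alpha> s)"
proof -
  obtain \<beta> where \<beta>: "ord_even \<beta>" "\<alpha> = osucc (osucc \<beta>)"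
    using ord_even_not_limit[OF even_\<alpha> assms(1)] by blast
  obtain q where q: "s (osucc \<beta>) = Some q" and le_q: "\<And>\<eta>. \<eta> < \<alpha> \<Longrightarrow> Pminus_le \<theta> (Some q) (s \<eta>)"
    using last_move[OF \<beta>(2) assms(2)] by blast
  interpret successor_step \<theta> q "s \<beta>"
    using \<beta>(2,1) q by (rule successor_step_played)
  define r where "r = extend_cond q (s \<beta>)"
  have "\<beta> < \<alpha>"
    using \<beta>(2) less_osucc less_trans by blast
  have strategy: "strategy \<alpha> s = Some r"
    unfolding strategy_def r_def using assms \<beta>(2) q by auto
  have lower: "Pminus_le \<theta> (Some r) (s \<eta>)" if "\<eta> < \<alpha>" for \<eta>
    using Pminus_le_trans[OF extend_cond_le le_q[OF that]] unfolding r_def .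
  have above: "gam q' < gam r" if "\<eta> < \<alpha>" "s \<eta> = Some q'" for \<eta> q'
  proof -
    have "gam q' \<le> gam q"
      using le_q[OF that(1)] that(2) by (simp add: Pminus_le_Some_iff)
    then show ?thesis
      unfolding r_def using next_limit(1) by (simp add: le_less_trans)
  qed
  have coherent: "top_coherent \<theta> p' r" if \<eta>: "\<eta> < \<alpha>" "ord_even \<eta>" "s \<eta> = Some p'" for \<eta> p'
  proof (cases "\<eta> = \<beta>")
    case True
    then show ?thesis
      using top_coherent_extend_cond \<eta>(3) unfolding r_def by simp
  next
    case False
    then have "\<eta> < \<beta>"
      using ord_even_less_osucc_osucc[OF \<beta>(1) \<eta>(1)[unfolded \<beta>(2)] \<eta>(2)] by simp
    then obtain pb where "s \<beta> = Some pb"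
      using even_move_None[OF \<open>\<beta> < \<alpha>\<close> \<beta>(1)] \<eta>(3) by fastforce
    then show ?thesis
      using even_move_Some(3)[OF \<open>\<beta> < \<alpha>\<close> \<beta>(1)] \<open>\<eta> < \<beta>\<close> \<eta>(2,3)
        top_coherent_trans top_coherent_extend_cond unfolding r_def by blast
  qed
  show ?thesis
    unfolding lower_bound_def even_move_ok_def strategy
    using valid_extend_cond lower above coherent unfolding r_def by simp
qed

lemma strategy_answer_ok:
  "lower_bound s \<alpha> (strategy \<alpha> s) \<and> even_move_ok s \<alpha> (strategy \<alpha> s)
    \<and> ((\<forall>\<beta>. \<alpha> \<le> \<beta>) \<longrightarrow> strategy \<alpha> s = None)"
proof (cases "\<exists>\<eta><\<alpha>. s \<eta> \<noteq> None")
  case True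
  then have "\<not> (\<forall>\<beta>. \<alpha> \<le> \<beta>)"
    by (auto simp: not_le)
  then show ?thesis
    using strategy_limit strategy_successor True by blast
next
  case False
  then show ?thesis
    using strategy_trivial unfolding strategy_def by auto
qed

end

context forcing_setting
begin

lemma play_moves_ok:
  assumes in_P: "\<forall>\<beta><\<alpha>. s \<beta> \<in> Pminus \<theta>"
    and II: "\<forall>\<beta><\<alpha>. ord_even \<beta> \<longrightarrow> s \<beta> = strategy \<beta> (restr s None \<beta>)"
    and I: "\<forall>\<beta><\<alpha>. \<not> ord_even \<beta> \<longrightarrow> (\<forall>\<eta><\<beta>. Pminus_le \<theta> (s \<beta>) (s \<eta>))"
  shows "\<beta> < \<alpha> \<Longrightarrow> move_ok s \<beta>"
proof (induction \<beta> rule: less_induct)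
  case (less \<beta>)
  show ?case
  proof (cases "ord_even \<beta>")
    case True
    interpret play \<theta> s \<beta>
      using True less by unfold_locales (auto intro: less_trans)
    have "s \<beta> = strategy \<beta> s"
      using II less.prems True strategy_restr by simp
    then show ?thesis
      unfolding move_ok_def using strategy_answer_ok by simp
  next
    case False
    then show ?thesis
      unfolding move_ok_def lower_bound_def using in_P I less.prems by blast
  qed
qed

end

lemma forcing_setting_if_regular:
  assumes "univ_uncountable_regular TYPE('k::wellorder)" and "uncountable_regular (\<theta>::'k)"
  shows "forcing_setting \<theta>"
proof -
  have uncountable: "\<not> countable (UNIV :: 'k set)"
    and small: "\<And>a::'k. {x. x < a} \<prec> (UNIV :: 'k set)"
    and unbounded: "\<And>X :: 'k set. (\<forall>a. \<exists>x\<in>X. a \<le> x) \<Longrightarrow> (UNIV :: 'k set) \<lesssim> X"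
    using assms(1) unfolding univ_uncountable_regular_def by blast+
  have bounded: "\<exists>u. \<forall>x\<in>X. x < u" if "\<not> (UNIV :: 'k set) \<lesssim> X" for X :: "'k set"
    using that unbounded by (meson not_le)
  show ?thesis
  proof
    fix x :: 'k
    have "\<not> (UNIV :: 'k set) \<lesssim> {x}"
      using uncountable countable_lepoll by blast
    then show "\<exists>y. x < y"
      using bounded by blast
  next
    fix X :: "'k set"
    assume "countable X"
    then show "\<exists>u. \<forall>x\<in>X. x < u"
      using bounded uncountable countable_lepoll by blast
  next
    fix X :: "'k set" and a :: 'k
    assume "X \<lesssim> {x. x < a}"
    then have "\<not> (UNIV :: 'k set) \<lesssim> X"
      using small lepoll_trans lesspoll_trans1 lesspoll_not_refl by metis
    then show "\<exists>u. \<forall>x\<in>X. x < u"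
      by (rule bounded)
  next
    have "{x. x < \<theta>} \<noteq> {}"
      using assms(2) unfolding uncountable_regular_def by auto
    then show "ord0 < \<theta>"
      using ord0_le le_less_trans by blast
  qed
qed

theorem lemma3p11:
  fixes \<theta> :: "'k::wellorder"
  assumes "univ_uncountable_regular TYPE('k)"
    and "uncountable_regular \<theta>"
  shows "strat_closed_full (Pminus \<theta>) (Pminus_le \<theta>) None TYPE('k)"
proof -
  interpret forcing_setting \<theta>
    using assms by (rule forcing_setting_if_regular)
  show ?thesis
    unfolding strat_closed_full_def
  proof (intro exI[of _ strategy] allI impI, elim conjE)
    fix \<alpha> s
    assume even: "ord_even \<alpha>" and "\<forall>\<beta><\<alpha>. s \<beta> \<in> Pminus \<theta>"
      and "\<forall>\<beta><\<alpha>. ord_even \<beta> \<longrightarrow> s \<beta> = strategy \<beta> (restr s None \<beta>)"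
      and "\<forall>\<beta><\<alpha>. \<not> ord_even \<beta> \<longrightarrow> (\<forall>\<eta><\<beta>. Pminus_le \<theta> (s \<beta>) (s \<eta>))"
    then interpret play \<theta> s \<alpha>
      using play_moves_ok by unfold_locales blast+
    show "strategy \<alpha> (restr s None \<alpha>) \<in> Pminus \<theta>
      \<and> (\<forall>\<eta><\<alpha>. Pminus_le \<theta> (strategy \<alpha> (restr s None \<alpha>)) (s \<eta>))
      \<and> ((\<forall>\<beta>. \<alpha> \<le> \<beta>) \<longrightarrow> strategy \<alpha> (restr s None \<alpha>) = None)"
      using strategy_answer_ok unfolding strategy_restr[OF even] lower_bound_def by blast
  qed
qed

end
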